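(* Let $(G,\omega)$ be a weighted digraph without loops, let $H_1,\dots,H_s$ be the undirectizations of its strongly connected or single node components, let $V$ be its square-rooted weighted Hashimoto matrix, let $\sigma$ be the smallest positive entry of $V$ (when $V\ne0$), and let $r$ be the radius of convergence of $\sum_{k=0}^\infty t^kp_k(A)$. Then: (a) if every $H_i$ is a tree or an isolated node, then $r=\infty$; (b) if no $H_i$ has more than one cycle but at least one $H_i$ has exactly one cycle, then $r\le1/\sigma$; (c) if some $H_i$ has more than one cycle, then $r<1/\sigma$.
   Context: A weighted digraph: digraph $G$ (no loops or multiple edges) with $\omega:E\to(0,\infty)$. Weight of a walk = product of weights of its edges (with repetition); non-backtracking walk: $v_{r+2}\ne v_r$ for all $r$. $p_k(A)_{ij}$ = sum of weights of non-backtracking walks of length $k$ from $i$ to $j$, $p_0(A)=I$. $V_{ef}=\sqrt{\omega(e)\omega(f)}$ if $e=(i,j),f=(j,k)$ with $k\ne i$, else $0$. Components: induced subgraphs on classes of "$i=j$ or mutually reachable by directed walks". Undirectization: undirected simple graph with edge $\{i,j\}$ whenever $(i,j)$ or $(j,i)$ is an edge; a cycle is a closed path of length $\ge3$ up to cyclic permutations and reversal. *)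

theory Defs
  imports "HOL-Analysis.Analysis"
begin

text \<open>A weighted digraph: vertex type 'n (finite), edge set E (no loops), weight function w
  (only its values on E matter; positivity on E is assumed in the theorem).\<close>

definition nb_walk :: "('n \<times> 'n) set \<Rightarrow> 'n list \<Rightarrow> bool" where
  "nb_walk E vs \<longleftrightarrow> vs \<noteq> [] \<and>
     (\<forall>r. r + 1 < length vs \<longrightarrow> (vs ! r, vs ! (r + 1)) \<in> E) \<and>
     (\<forall>r. r + 2 < length vs \<longrightarrow> vs ! (r + 2) \<noteq> vs ! r)"

definition walk_weight :: "('n \<times> 'n \<Rightarrow> real) \<Rightarrow> 'n list \<Rightarrow> real" where
  "walk_weight w vs = (\<Prod>r < length vs - 1. w (vs ! r, vs ! (r + 1)))"

definition pk :: "('n::finite \<times> 'n) set \<Rightarrow> ('n \<times> 'n \<Rightarrow> real) \<Rightarrow> nat \<Rightarrow> real ^'n ^'n" where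
  "pk E w k = (\<chi> i j. \<Sum>vs \<in> {vs. length vs = k + 1 \<and> nb_walk E vs \<and> hd vs = i \<and> last vs = j}.
                         walk_weight w vs)"

definition hashimoto_sqrt :: "('n \<times> 'n) set \<Rightarrow> ('n \<times> 'n \<Rightarrow> real) \<Rightarrow> 'n \<times> 'n \<Rightarrow> 'n \<times> 'n \<Rightarrow> real" where
  "hashimoto_sqrt E w e f =
     (if e \<in> E \<and> f \<in> E \<and> snd e = fst f \<and> snd f \<noteq> fst e then sqrt (w e * w f) else 0)"

definition sigma_min :: "('n \<times> 'n) set \<Rightarrow> ('n \<times> 'n \<Rightarrow> real) \<Rightarrow> real" where
  "sigma_min E w = Min {hashimoto_sqrt E w e f | e f. e \<in> E \<and> f \<in> E \<and> hashimoto_sqrt E w e f > 0}"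

definition comp_rel :: "('n \<times> 'n) set \<Rightarrow> ('n \<times> 'n) set" where
  "comp_rel E = {(i, j). i = j \<or> ((i, j) \<in> E\<^sup>+ \<and> (j, i) \<in> E\<^sup>+)}"

definition components :: "('n \<times> 'n) set \<Rightarrow> 'n set set" where
  "components E = UNIV // comp_rel E"

text \<open>Undirectization of the component induced on C: adjacency relation on C.\<close>
definition und_adj :: "('n \<times> 'n) set \<Rightarrow> 'n set \<Rightarrow> 'n \<Rightarrow> 'n \<Rightarrow> bool" where
  "und_adj E C i j \<longleftrightarrow> i \<in> C \<and> j \<in> C \<and> i \<noteq> j \<and> ((i, j) \<in> E \<or> (j, i) \<in> E)"

definition cycle_list :: "('n \<Rightarrow> 'n \<Rightarrow> bool) \<Rightarrow> 'n list \<Rightarrow> bool" where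
  "cycle_list adj xs \<longleftrightarrow> length xs \<ge> 3 \<and> distinct xs \<and>
     (\<forall>r. r + 1 < length xs \<longrightarrow> adj (xs ! r) (xs ! (r + 1))) \<and> adj (last xs) (hd xs)"

text \<open>Cycles: closed paths up to cyclic permutation and reversal.\<close>
definition cycles :: "('n \<Rightarrow> 'n \<Rightarrow> bool) \<Rightarrow> 'n list set set" where
  "cycles adj = {{ys. \<exists>k. ys = rotate k xs \<or> ys = rotate k (rev xs)} | xs. cycle_list adj xs}"

definition und_connected :: "('n \<Rightarrow> 'n \<Rightarrow> bool) \<Rightarrow> 'n set \<Rightarrow> bool" where
  "und_connected adj C \<longleftrightarrow> (\<forall>i\<in>C. \<forall>j\<in>C. (i, j) \<in> {(a, b). adj a b}\<^sup>*)"

definition is_tree :: "('n \<Rightarrow> 'n \<Rightarrow> bool) \<Rightarrow> 'n set \<Rightarrow> bool" where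
  "is_tree adj C \<longleftrightarrow> C \<noteq> {} \<and> und_connected adj C \<and> cycles adj = {}"

definition is_isolated_node :: "('n \<Rightarrow> 'n \<Rightarrow> bool) \<Rightarrow> 'n set \<Rightarrow> bool" where
  "is_isolated_node adj C \<longleftrightarrow> card C = 1 \<and> (\<forall>i j. \<not> adj i j)"

end

theory Submission
  imports Defs
begin

text \<open>Everything is read off counts of non-backtracking walks. All entries of \<open>p\<^sub>k(A)\<close> are
  non-negative, and a non-backtracking walk with \<open>k\<close> steps has weight at least
  \<open>(min w) \<sigma>\<^sup>k\<^sup>-\<^sup>1\<close>, because every inner vertex contributes an entry \<open>sqrt (w e * w f) \<ge> \<sigma>\<close> of
  \<open>V\<close>.

  (a) A non-backtracking walk longer than the number of vertices repeats a vertex, and a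
  shortest repetition is a cycle of the undirectization of one component; so without cycles
  \<open>p\<^sub>k(A) = 0\<close> for large \<open>k\<close>.

  (b) An undirected cycle of a component yields a directed cycle (an edge usable in one direction
  only closes up with a directed path back), and its \<open>m\<close>-fold traversals give \<open>r \<le> 1/\<sigma>\<close>.

  (c) A second cycle yields a detour, a non-backtracking walk that leaves the directed cycle and
  returns to it. Detour and cycle combine into two distinct closed walks of a common length \<open>K\<close>
  at one vertex that can be concatenated in any order; the \<open>2\<^sup>m\<close> concatenations of \<open>m\<close> of them
  give \<open>r \<le> 2\<^sup>-\<^sup>1\<^sup>/\<^sup>K/\<sigma> < 1/\<sigma>\<close>.\<close>
section \<open>Non-backtracking walks and their weights\<close>

definition is_walk :: "('n \<times> 'n) set \<Rightarrow> 'n list \<Rightarrow> bool" where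
  "is_walk E W \<longleftrightarrow> (\<forall>r. Suc r < length W \<longrightarrow> (W!r, W!Suc r) \<in> E)"

definition no_backtrack :: "'n list \<Rightarrow> bool" where
  "no_backtrack W \<longleftrightarrow> (\<forall>r. Suc (Suc r) < length W \<longrightarrow> W!Suc (Suc r) \<noteq> W!r)"

lemma nb_walk_iff: "nb_walk E W \<longleftrightarrow> W \<noteq> [] \<and> is_walk E W \<and> no_backtrack W"
  unfolding nb_walk_def is_walk_def no_backtrack_def by simp

lemma nb_walk_imp_walk: "nb_walk E W \<Longrightarrow> is_walk E W"
  by (simp add: nb_walk_iff)

lemma is_walk_Cons2: "is_walk E (x # y # zs) \<longleftrightarrow> (x, y) \<in> E \<and> is_walk E (y # zs)"
  unfolding is_walk_def by (auto simp: less_Suc_eq_0_disj)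

lemma is_walk_Cons: "ps \<noteq> [] \<Longrightarrow> is_walk E (a # ps) \<longleftrightarrow> (a, hd ps) \<in> E \<and> is_walk E ps"
  by (cases ps) (simp_all add: is_walk_Cons2)

lemma is_walk_appendD: "is_walk E (us @ zs) \<Longrightarrow> is_walk E zs"
  unfolding is_walk_def
  by (metis add_Suc_right length_append nat_add_left_cancel_less nth_append_length_plus)

lemma no_backtrack_Cons2:
  "no_backtrack (x # y # zs) \<longleftrightarrow> (zs \<noteq> [] \<longrightarrow> hd zs \<noteq> x) \<and> no_backtrack (y # zs)"
  unfolding no_backtrack_def by (cases zs) (auto simp: less_Suc_eq_0_disj)

lemma nb_walk_Cons2:
  "nb_walk E (x # y # zs) \<longleftrightarrow> (x, y) \<in> E \<and> (zs \<noteq> [] \<longrightarrow> hd zs \<noteq> x) \<and> nb_walk E (y # zs)"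
  unfolding nb_walk_iff is_walk_Cons2 no_backtrack_Cons2 by auto

lemma nb_walk_single [simp]: "nb_walk E [x]"
  by (simp add: nb_walk_def)

lemma nb_walk_Nil [simp]: "\<not> nb_walk E []"
  by (simp add: nb_walk_def)

lemma distinct_walk_imp_nb_walk:
  assumes "distinct W" "W \<noteq> []" "is_walk E W"
  shows "nb_walk E W"
  using assms by (auto simp: nb_walk_iff no_backtrack_def nth_eq_iff_index_eq)

lemma walk_reaches:
  assumes "is_walk E W" "i < j" "j < length W"
  shows "(W!i, W!j) \<in> E\<^sup>+"
  using assms(2,3)
proof (induction j)
  case (Suc j)
  have "(W!j, W!Suc j) \<in> E" using assms(1) Suc.prems unfolding is_walk_def by simp
  then show ?case using Suc by (cases "i = j") auto
qed simp

lemma walk_reaches_rtrancl: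
  assumes "is_walk E W" "i \<le> j" "j < length W"
  shows "(W!i, W!j) \<in> E\<^sup>*"
  using walk_reaches[OF assms(1), of i j] assms(2,3) by (cases "i = j") auto

lemma rtrancl_imp_simple_walk:
  assumes "(a, b) \<in> E\<^sup>*"
  obtains ps where "distinct ps" "ps \<noteq> []" "hd ps = a" "last ps = b" "is_walk E ps"
proof -
  have "\<exists>ps. distinct ps \<and> ps \<noteq> [] \<and> hd ps = a \<and> last ps = b \<and> is_walk E ps"
    using assms
  proof (induction rule: converse_rtrancl_induct)
    case base
    show ?case by (intro exI[of _ "[b]"]) (simp add: is_walk_def)
  next
    case (step a y)
    then obtain ps where ps: "distinct ps" "ps \<noteq> []" "hd ps = y" "last ps = b" "is_walk E ps"
      by blast
    show ?case
    proof (cases "a \<in> set ps")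
      case True
      \<comment> \<open>shortcut: restart the walk at the earlier visit of \<open>a\<close>\<close>
      then obtain us vs where "ps = us @ a # vs" by (meson split_list)
      then show ?thesis using ps by (intro exI[of _ "a # vs"]) (auto dest: is_walk_appendD)
    next
      case False
      then show ?thesis using ps step(1) by (intro exI[of _ "a # ps"]) (auto simp: is_walk_Cons)
    qed
  qed
  then show ?thesis using that by blast
qed

lemma nb_walk_append:
  assumes "nb_walk E xs" "nb_walk E ys" "last xs = hd ys"
    "length xs \<ge> 2 \<Longrightarrow> length ys \<ge> 2 \<Longrightarrow> xs ! (length xs - 2) \<noteq> ys ! 1"
  shows "nb_walk E (xs @ tl ys)"
  using assms
proof (induction xs rule: induct_list012)
  case 1 then show ?case by simp
next
  case (2 x) then show ?case by (cases ys) auto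
next
  case (3 x y zs)
  have n: "(x, y) \<in> E" "zs \<noteq> [] \<longrightarrow> hd zs \<noteq> x" "nb_walk E (y # zs)"
    using "3.prems"(1) by (simp_all add: nb_walk_Cons2)
  have IH: "nb_walk E ((y # zs) @ tl ys)"
    using "3.prems"(2-4) by (intro "3.IH"(2)[OF n(3)]) (cases zs; auto)+
  have "zs @ tl ys \<noteq> [] \<longrightarrow> hd (zs @ tl ys) \<noteq> x"
    using n(2) "3.prems"(3,4) by (cases zs; cases ys; cases "tl ys") auto
  then show ?case using n(1) IH by (simp add: nb_walk_Cons2)
qed

lemma nb_walk_take_drop:
  assumes W: "nb_walk E W" and se: "s \<le> e" "e < length W"
  shows "nb_walk E (take (e - s + 1) (drop s W))"
proof -
  define P where "P = take (e - s + 1) (drop s W)"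
  have lP: "length P = e - s + 1" and nP: "\<And>r. r < length P \<Longrightarrow> P ! r = W ! (s + r)"
    unfolding P_def using se by auto
  have e1: "\<And>r. Suc r < length W \<Longrightarrow> (W!r, W!Suc r) \<in> E"
    and b1: "\<And>r. Suc (Suc r) < length W \<Longrightarrow> W!Suc (Suc r) \<noteq> W!r"
    using W unfolding nb_walk_iff is_walk_def no_backtrack_def by auto
  have "is_walk E P" unfolding is_walk_def
  proof (intro allI impI)
    fix r assume r: "Suc r < length P"
    then show "(P!r, P!Suc r) \<in> E" using e1[of "s + r"] nP[of r] nP[of "Suc r"] lP se by simp
  qed
  moreover have "no_backtrack P" unfolding no_backtrack_def
  proof (intro allI impI)
    fix r assume r: "Suc (Suc r) < length P"
    then show "P!Suc (Suc r) \<noteq> P!r" using b1[of "s + r"] nP[of r] nP[of "Suc (Suc r)"] lP se by simp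
  qed
  ultimately show ?thesis using lP unfolding P_def nb_walk_iff by auto
qed

lemma append_tl_nth_simps:
  assumes X: "length X \<ge> 2" and Y: "length Y \<ge> 2" and XY: "last X = hd Y"
  shows "(X @ tl Y) ! 1 = X ! 1"
    and "(X @ tl Y) ! (length (X @ tl Y) - 2) = Y ! (length Y - 2)"
    and "(X @ tl Y) ! length X = Y ! 1"
    and "length (X @ tl Y) = length X + length Y - 1"
    and "hd (X @ tl Y) = hd X"
    and "last (X @ tl Y) = last Y"
proof -
  obtain y0 y1 ys where Yc: "Y = y0 # y1 # ys" using Y by (cases Y; cases "tl Y") auto
  obtain x0 x1 xs where Xc: "X = x0 # x1 # xs" using X by (cases X; cases "tl X") auto
  show "(X @ tl Y) ! 1 = X ! 1" "(X @ tl Y) ! length X = Y ! 1"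
    "length (X @ tl Y) = length X + length Y - 1" "hd (X @ tl Y) = hd X" "last (X @ tl Y) = last Y"
    using Xc Yc by (simp_all add: nth_append)
  show "(X @ tl Y) ! (length (X @ tl Y) - 2) = Y ! (length Y - 2)"
  proof (cases ys)
    case Nil
    have "(X @ tl Y) ! (length (X @ tl Y) - 2) = (X @ [y1]) ! (length X - 1)"
      using Xc Yc Nil by simp
    also have "\<dots> = last X" using Xc by (simp add: nth_append last_conv_nth)
    finally show ?thesis using Xc Yc Nil XY by simp
  next
    case (Cons z zs)
    then show ?thesis using Xc Yc by (simp add: nth_append)
  qed
qed

lemma walk_weight_Cons2: "walk_weight w (x # y # zs) = w (x, y) * walk_weight w (y # zs)"
  unfolding walk_weight_def by (simp del: prod.lessThan_Suc add: prod.lessThan_Suc_shift)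

lemma walk_weight_single [simp]: "walk_weight w [x] = 1"
  unfolding walk_weight_def by simp

lemma walk_weight_nonneg:
  assumes "\<forall>e\<in>E. w e > 0" "is_walk E W"
  shows "walk_weight w W \<ge> 0"
  using assms unfolding walk_weight_def is_walk_def
  by (intro prod_nonneg) (auto intro: less_imp_le)

text \<open>Every inner vertex of a non-backtracking walk contributes a factor
  \<open>sqrt (w e * w f) \<ge> sg\<close>; the two half-edges at the ends are bounded by \<open>sqrt wmin\<close>.\<close>

lemma walk_weight_ge_aux:
  assumes wm: "wmin > 0" "\<forall>e\<in>E. w e \<ge> wmin" and sg: "sg \<ge> 0"
    and V: "\<And>a b c. (a, b) \<in> E \<Longrightarrow> (b, c) \<in> E \<Longrightarrow> c \<noteq> a \<Longrightarrow> sg \<le> sqrt (w (a, b) * w (b, c))"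
  shows "nb_walk E (x # y # zs) \<Longrightarrow>
     sqrt wmin * sg ^ length zs * sqrt (w (x, y)) \<le> walk_weight w (x # y # zs)"
proof (induction zs arbitrary: x y)
  case Nil
  have "w (x, y) \<ge> wmin" using Nil wm by (simp add: nb_walk_Cons2)
  then have "sqrt wmin * sqrt (w (x, y)) \<le> sqrt (w (x, y)) * sqrt (w (x, y))"
    using wm by (intro mult_right_mono) auto
  also have "\<dots> = w (x, y)" using wm \<open>w (x, y) \<ge> wmin\<close> by simp
  finally show ?case by (simp add: walk_weight_Cons2)
next
  case (Cons z zs)
  have n: "(x, y) \<in> E" "(y, z) \<in> E" "z \<noteq> x" "nb_walk E (y # z # zs)"
    using Cons.prems by (auto simp: nb_walk_Cons2)
  have pos: "w (x, y) > 0" "w (y, z) > 0" using wm n(1,2) by (auto intro: less_le_trans)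
  have "sqrt wmin * sg ^ length (z # zs) * sqrt (w (x, y))
        = sqrt (w (x, y)) * (sqrt wmin * sg ^ length zs) * sg" by (simp add: algebra_simps)
  also have "\<dots> \<le> sqrt (w (x, y)) * (sqrt wmin * sg ^ length zs) * sqrt (w (x, y) * w (y, z))"
    using V[OF n(1-3)] wm sg pos by (intro mult_left_mono) auto
  also have "\<dots> = w (x, y) * (sqrt wmin * sg ^ length zs * sqrt (w (y, z)))"
    using pos by (simp add: real_sqrt_mult algebra_simps)
  also have "\<dots> \<le> w (x, y) * walk_weight w (y # z # zs)"
    using Cons.IH[OF n(4)] pos by (intro mult_left_mono) auto
  finally show ?case by (simp add: walk_weight_Cons2)
qed

lemma walk_weight_ge:
  assumes wm: "wmin > 0" "\<forall>e\<in>E. w e \<ge> wmin" and sg: "sg \<ge> 0"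
    and V: "\<And>a b c. (a, b) \<in> E \<Longrightarrow> (b, c) \<in> E \<Longrightarrow> c \<noteq> a \<Longrightarrow> sg \<le> sqrt (w (a, b) * w (b, c))"
    and W: "nb_walk E W" "length W = k + 2"
  shows "wmin * sg ^ k \<le> walk_weight w W"
proof -
  obtain x y zs where Wx: "W = x # y # zs" using W(2) by (cases W; cases "tl W") auto
  have "(x, y) \<in> E" using W(1) unfolding Wx nb_walk_Cons2 by simp
  have "wmin * sg ^ k = sqrt wmin * sg ^ k * sqrt wmin" using wm by (simp add: algebra_simps)
  also have "\<dots> \<le> sqrt wmin * sg ^ k * sqrt (w (x, y))"
    using wm sg \<open>(x, y) \<in> E\<close> by (intro mult_left_mono) auto
  also have "\<dots> \<le> walk_weight w W"
    using walk_weight_ge_aux[OF wm sg V, of x y zs] W Wx by simp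
  finally show ?thesis .
qed

section \<open>Lower bounds for the radius of convergence\<close>

lemma finite_lists_of_length: "finite {vs :: 'n::finite list. length vs = k \<and> Q vs}"
  by (rule finite_subset[OF _ finite_lists_length_eq[of "UNIV :: 'n set" k]]) auto

lemma pk_entry_ge_sum:
  assumes wpos: "\<forall>e\<in>E. w e > 0"
    and T: "T \<subseteq> {vs. length vs = k + 1 \<and> nb_walk E vs \<and> hd vs = i \<and> last vs = j}"
  shows "sum (walk_weight w) T \<le> pk E w k $ i $ j"
proof -
  let ?S = "{vs. length vs = k + 1 \<and> nb_walk E vs \<and> hd vs = i \<and> last vs = j}"
  have "finite ?S" by (rule finite_lists_of_length)
  then have "sum (walk_weight w) T \<le> sum (walk_weight w) ?S"
    using T by (intro sum_mono2) (auto intro!: walk_weight_nonneg[OF wpos] nb_walk_imp_walk)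
  then show ?thesis unfolding pk_def by simp
qed

lemma abs_entry_le_norm: "\<bar>M $ i $ j\<bar> \<le> norm (M :: real ^'n ^'m)"
  using Finite_Cartesian_Product.norm_nth_le[of "M $ i" j]
    Finite_Cartesian_Product.norm_nth_le[of M i] by simp

lemma conv_radius_le_of_lower_bound:
  fixes f :: "nat \<Rightarrow> 'a::banach"
  assumes K: "K > 0" and c: "c > 0" and l: "l > 0"
    and bnd: "\<And>m. m \<ge> 1 \<Longrightarrow> c * l ^ (m * K) \<le> norm (f (m * K))"
  shows "conv_radius f \<le> ereal (1 / l)"
proof -
  define X where "X = (\<lambda>n. ereal (root n (norm (f n))))"
  define r where "r = (\<lambda>m::nat. (m + 1) * K)"
  have sm: "strict_mono r" unfolding r_def using K by (intro strict_monoI) auto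
  have lim: "(\<lambda>m. ereal (l * root (r m) c)) \<longlonglongrightarrow> ereal (l * 1)"
  proof (intro tendsto_ereal tendsto_mult tendsto_const)
    show "(\<lambda>m. root (r m) c) \<longlonglongrightarrow> 1"
      using filterlim_compose[OF LIMSEQ_root_const[OF c] filterlim_subseq[OF sm]]
      by (simp add: o_def)
  qed
  have bound: "ereal (l * root (r m) c) \<le> (X \<circ> r) m" for m
  proof -
    have rp: "r m > 0" using K unfolding r_def by simp
    have "l * root (r m) c = root (r m) (c * l ^ r m)"
      using rp l c by (simp add: real_root_mult real_root_pos2)
    also have "\<dots> \<le> root (r m) (norm (f (r m)))"
      using bnd[of "m + 1"] rp unfolding r_def by simp
    finally show ?thesis by (simp add: X_def)
  qed
  have "ereal l = limsup (\<lambda>m. ereal (l * root (r m) c))"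
    using lim_imp_Limsup[OF _ lim] by simp
  also have "\<dots> \<le> limsup (X \<circ> r)"
    by (rule Limsup_mono) (use bound in \<open>simp add: always_eventually\<close>)
  also have "\<dots> \<le> limsup X" by (rule limsup_subseq_mono[OF sm])
  finally have "ereal l \<le> limsup X" .
  then have "inverse (limsup X) \<le> inverse (ereal l)"
    using l by (intro ereal_inverse_antimono) auto
  then show ?thesis using l unfolding conv_radius_def X_def by (simp add: divide_inverse)
qed

lemma obtain_weight_lower_bound:
  fixes E :: "('n::finite \<times> 'n) set" and w :: "'n \<times> 'n \<Rightarrow> real"
  assumes "\<forall>e\<in>E. w e > 0"
  obtains wmin where "wmin > 0" "\<forall>e\<in>E. wmin \<le> w e"
proof (cases "E = {}")
  case False
  then have "Min (w ` E) \<in> w ` E" by (intro Min_in) auto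
  then have "Min (w ` E) > 0" using assms by auto
  moreover have "\<forall>e\<in>E. Min (w ` E) \<le> w e" by simp
  ultimately show ?thesis by (rule that)
qed (use that[of 1] in auto)

lemma sigma_min_bounds:
  fixes E :: "('n::finite \<times> 'n) set"
  assumes wpos: "\<forall>e\<in>E. w e > 0" and abc: "(a, b) \<in> E" "(b, c) \<in> E" "c \<noteq> a"
  shows "sigma_min E w \<le> sqrt (w (a, b) * w (b, c))"
    and "sigma_min E w > 0"
proof -
  let ?S = "{hashimoto_sqrt E w e f | e f. e \<in> E \<and> f \<in> E \<and> hashimoto_sqrt E w e f > 0}"
  have fin: "finite ?S"
    by (rule finite_subset[of _ "(\<lambda>(e, f). hashimoto_sqrt E w e f) ` (E \<times> E)"]) auto
  have "hashimoto_sqrt E w (a, b) (b, c) = sqrt (w (a, b) * w (b, c))"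
    using abc unfolding hashimoto_sqrt_def by simp
  moreover have "sqrt (w (a, b) * w (b, c)) > 0" using wpos abc by simp
  ultimately have mem: "sqrt (w (a, b) * w (b, c)) \<in> ?S" using abc by force
  show "sigma_min E w \<le> sqrt (w (a, b) * w (b, c))"
    unfolding sigma_min_def by (rule Min_le[OF fin mem])
  have "sigma_min E w \<in> ?S" unfolding sigma_min_def using fin mem by (intro Min_in) auto
  then show "sigma_min E w > 0" by auto
qed

lemma sigma_min_pos_if_long_nb_walk:
  fixes E :: "('n::finite \<times> 'n) set"
  assumes wpos: "\<forall>e\<in>E. w e > 0" and W: "nb_walk E W" "length W \<ge> 3"
  shows "sigma_min E w > 0"
proof -
  obtain x y z zs where "W = x # y # z # zs" using W(2)
    by (cases W; cases "tl W"; cases "tl (tl W)") auto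
  then have "(x, y) \<in> E" "(y, z) \<in> E" "z \<noteq> x" using W(1) by (auto simp: nb_walk_Cons2)
  then show ?thesis by (rule sigma_min_bounds(2)[OF wpos])
qed

lemma norm_pk_ge_closed_walks:
  fixes E :: "('n::finite \<times> 'n) set"
  assumes wpos: "\<forall>e\<in>E. w e > 0" and wm: "wmin > 0" "\<forall>e\<in>E. wmin \<le> w e"
    and sg: "sigma_min E w \<ge> 0"
    and T: "T \<subseteq> {vs. length vs = k + 2 \<and> nb_walk E vs \<and> hd vs = v \<and> last vs = v}"
  shows "real (card T) * (wmin * sigma_min E w ^ k) \<le> norm (pk E w (k + 1))"
proof -
  have T': "T \<subseteq> {vs. length vs = (k + 1) + 1 \<and> nb_walk E vs \<and> hd vs = v \<and> last vs = v}"
    using T by simp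
  have "wmin * sigma_min E w ^ k \<le> walk_weight w vs" if "vs \<in> T" for vs
    using T that walk_weight_ge[OF wm sg sigma_min_bounds(1)[OF wpos]] by blast
  then have "real (card T) * (wmin * sigma_min E w ^ k) \<le> sum (walk_weight w) T"
    by (metis sum_bounded_below)
  also have "\<dots> \<le> pk E w (k + 1) $ v $ v" by (rule pk_entry_ge_sum[OF wpos T'])
  also have "\<dots> \<le> norm (pk E w (k + 1))" using abs_entry_le_norm[of "pk E w (k + 1)" v v] by simp
  finally show ?thesis .
qed

text \<open>No positivity of \<open>\<sigma>\<close> is assumed: the family for \<open>m = 3\<close> contains a walk with three steps.\<close>

lemma conv_radius_pk_le_of_closed_walks:
  fixes E :: "('n::finite \<times> 'n) set"
  assumes wpos: "\<forall>e\<in>E. w e > 0" and K: "K > 0" and \<beta>: "\<beta> \<ge> 1"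
    and fam: "\<And>m. m \<ge> 1 \<Longrightarrow> \<exists>v T. T \<subseteq> {vs. length vs = m * K + 1 \<and> nb_walk E vs \<and> hd vs = v \<and> last vs = v}
                     \<and> \<beta> ^ m \<le> real (card T)"
  shows "conv_radius (pk E w) \<le> ereal (1 / (root K \<beta> * sigma_min E w))"
proof -
  obtain wmin where wm: "wmin > 0" "\<forall>e\<in>E. wmin \<le> w e"
    using obtain_weight_lower_bound[OF wpos] by blast
  define sg where "sg = sigma_min E w"
  have sg: "sg > 0"
  proof -
    obtain v T where T: "T \<subseteq> {vs. length vs = 3 * K + 1 \<and> nb_walk E vs \<and> hd vs = v \<and> last vs = v}"
      "\<beta> ^ 3 \<le> real (card T)" using fam[of 3] by auto
    have "real (card T) \<ge> 1" using one_le_power[OF \<beta>, of 3] T(2) by linarith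
    then obtain vs where "vs \<in> T" by (metis all_not_in_conv card.empty of_nat_0 zero_less_one not_le)
    then show ?thesis
      using T(1) K sigma_min_pos_if_long_nb_walk[OF wpos, of vs] unfolding sg_def by auto
  qed
  show ?thesis
    unfolding sg_def[symmetric]
  proof (rule conv_radius_le_of_lower_bound[OF K])
    show "wmin / sg > 0" and "root K \<beta> * sg > 0" using wm sg K \<beta> by simp_all
    fix m :: nat assume m: "m \<ge> 1"
    have mK: "m * K = (m * K - 1) + 1" using m K by simp
    obtain v T where T: "T \<subseteq> {vs. length vs = (m * K - 1) + 2 \<and> nb_walk E vs \<and> hd vs = v \<and> last vs = v}"
      "\<beta> ^ m \<le> real (card T)" using fam[OF m] mK by auto
    have "(root K \<beta> * sg) ^ (m * K) = \<beta> ^ m * sg * sg ^ (m * K - 1)"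
    proof -
      have "root K \<beta> ^ (m * K) = \<beta> ^ m"
        using K \<beta> by (simp add: mult.commute[of m K] power_mult real_root_pow_pos2)
      moreover have "sg ^ (m * K) = sg * sg ^ (m * K - 1)" by (subst mK) simp
      ultimately show ?thesis by (simp add: power_mult_distrib)
    qed
    then have "(wmin / sg) * (root K \<beta> * sg) ^ (m * K) \<le> real (card T) * (wmin * sg ^ (m * K - 1))"
      using T(2) wm sg by (simp add: field_simps mult_right_mono)
    also have "\<dots> \<le> norm (pk E w (m * K))"
      using norm_pk_ge_closed_walks[OF wpos wm _ T(1)] sg mK unfolding sg_def by simp
    finally show "(wmin / sg) * (root K \<beta> * sg) ^ (m * K) \<le> norm (pk E w (m * K))" .
  qed
qed

section \<open>Components and part (a)\<close>

lemma comp_rel_iff: "(x, y) \<in> comp_rel E \<longleftrightarrow> (x, y) \<in> E\<^sup>* \<and> (y, x) \<in> E\<^sup>*"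
  unfolding comp_rel_def by (auto simp: rtrancl_eq_or_trancl)

lemma equiv_comp_rel: "equiv UNIV (comp_rel E)"
  by (rule equivI) (auto simp: refl_on_def sym_def trans_def comp_rel_iff)

lemma component_eq_Image:
  assumes "C \<in> components E" "a \<in> C"
  shows "C = comp_rel E `` {a}"
  using assms equiv_comp_rel unfolding components_def
  by (metis equiv_class_eq_iff quotientE Image_singleton_iff)

lemma Image_in_components: "comp_rel E `` {x} \<in> components E"
  unfolding components_def by (rule quotientI) simp

lemma component_reach:
  assumes "C \<in> components E" "a \<in> C" "b \<in> C"
  shows "(a, b) \<in> E\<^sup>*"
  using component_eq_Image[OF assms(1,2)] assms(3) by (simp add: comp_rel_iff)

lemma closed_walk_in_component:
  assumes "is_walk E W" "W \<noteq> []" "(last W, hd W) \<in> E\<^sup>*"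
  shows "set W \<subseteq> comp_rel E `` {hd W}"
proof
  fix y assume "y \<in> set W"
  then obtain r where r: "r < length W" "y = W ! r" by (auto simp: in_set_conv_nth)
  have "(hd W, y) \<in> E\<^sup>*"
    using walk_reaches_rtrancl[OF assms(1), of 0 r] r assms(2) by (simp add: hd_conv_nth)
  moreover have "(y, last W) \<in> E\<^sup>*"
    using walk_reaches_rtrancl[OF assms(1), of r "length W - 1"] r assms(2) by (simp add: last_conv_nth)
  ultimately show "y \<in> comp_rel E `` {hd W}"
    using assms(3) by (simp add: comp_rel_iff)
qed

lemma cycle_list_in_component:
  assumes "cycle_list (und_adj E C) xs"
  shows "set xs \<subseteq> C"
proof
  fix y assume "y \<in> set xs"
  then obtain r where r: "r < length xs" "xs ! r = y" by (auto simp: in_set_conv_nth)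
  show "y \<in> C"
  proof (cases "r + 1 < length xs")
    case True then show ?thesis using assms r unfolding cycle_list_def und_adj_def by auto
  next
    case False
    then have "r = length xs - 1" "xs \<noteq> []" using r by auto
    then have "y = last xs" using r by (simp add: last_conv_nth)
    then show ?thesis using assms unfolding cycle_list_def und_adj_def by simp
  qed
qed

lemma obtain_shortest_repetition:
  assumes "\<not> distinct vs"
  obtains a d where "0 < d" "a + d < length vs" "vs ! a = vs ! (a + d)"
    "distinct (take d (drop a vs))"
proof -
  define Q where "Q = (\<lambda>d. d > 0 \<and> (\<exists>a. a + d < length vs \<and> vs ! a = vs ! (a + d)))"
  obtain i j where ij: "i < j" "j < length vs" "vs ! i = vs ! j"
    using assms by (auto simp: distinct_conv_nth) (metis linorder_neqE_nat)
  then have "Q (j - i)" unfolding Q_def by (auto intro!: exI[of _ i])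
  then have "Q (LEAST d. Q d)" by (rule LeastI)
  moreover define d where "d = (LEAST d. Q d)"
  ultimately obtain a where a: "0 < d" "a + d < length vs" "vs ! a = vs ! (a + d)"
    unfolding Q_def by blast
  have dmin: "d \<le> d'" if "Q d'" for d' unfolding d_def using that by (rule Least_le)
  define xs where "xs = take d (drop a vs)"
  have lx: "length xs = d" and nx: "\<And>p. p < d \<Longrightarrow> xs ! p = vs ! (a + p)"
    unfolding xs_def using a by auto
  have "distinct xs"
    unfolding distinct_conv_nth
  proof (intro allI impI notI)
    fix p q assume pq: "p < length xs" "q < length xs" "p \<noteq> q" and eq: "xs ! p = xs ! q"
    \<comment> \<open>a closer repetition inside the segment would contradict minimality\<close>
    have "Q (max p q - min p q)"
      unfolding Q_def using pq eq nx lx a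
      by (cases "p < q") (auto intro!: exI[of _ "a + min p q"] simp: max_def min_def)
    then show False using dmin pq lx by fastforce
  qed
  then show ?thesis using a that unfolding xs_def by blast
qed

lemma closed_nb_walk_length_ge_3:
  assumes noloops: "\<forall>i. (i, i) \<notin> E" and W: "nb_walk E (xs @ [hd xs])" and xs: "xs \<noteq> []"
  shows "length xs \<ge> 3"
proof (rule ccontr)
  assume "\<not> length xs \<ge> 3"
  then obtain x ys where "xs = x # ys" "length ys \<le> 1" using xs by (cases xs) auto
  then consider "xs = [x]" | y where "xs = [x, y]" by (cases ys) auto
  then show False
  proof cases
    case 1
    then show False using W noloops by (simp add: nb_walk_Cons2)
  next
    case 2
    then show False using W by (simp add: nb_walk_Cons2)
  qed
qed

lemma simple_closed_nb_walk_cycle_list: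
  assumes noloops: "\<forall>i. (i, i) \<notin> E"
    and W: "nb_walk E (xs @ [hd xs])" and xs: "xs \<noteq> []" "distinct xs"
  shows "cycle_list (und_adj E (comp_rel E `` {hd xs})) xs"
proof -
  let ?W = "xs @ [hd xs]"
  have walk: "is_walk E ?W" using W by (rule nb_walk_imp_walk)
  have step: "(?W ! r, ?W ! Suc r) \<in> E" if "r < length xs" for r
    using walk that unfolding is_walk_def by simp
  have inC: "set xs \<subseteq> comp_rel E `` {hd xs}"
    using closed_walk_in_component[OF walk] xs(1) by simp
  have "length xs \<ge> 3" by (rule closed_nb_walk_length_ge_3[OF noloops W xs(1)])
  moreover have "und_adj E (comp_rel E `` {hd xs}) (xs ! r) (xs ! (r + 1))" if "r + 1 < length xs" for r
  proof -
    have "xs ! r \<in> comp_rel E `` {hd xs}" "xs ! (r + 1) \<in> comp_rel E `` {hd xs}"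
    proof -
      have "xs ! r \<in> set xs" "xs ! (r + 1) \<in> set xs" using that by simp_all
      then show "xs ! r \<in> comp_rel E `` {hd xs}" "xs ! (r + 1) \<in> comp_rel E `` {hd xs}"
        using inC by blast+
    qed
    then show ?thesis using step[of r] that xs(2)
      by (auto simp: und_adj_def nth_append nth_eq_iff_index_eq)
  qed
  moreover have "und_adj E (comp_rel E `` {hd xs}) (last xs) (hd xs)"
  proof -
    have "last xs \<in> comp_rel E `` {hd xs}" "hd xs \<in> comp_rel E `` {hd xs}"
      using inC hd_in_set[OF xs(1)] last_in_set[OF xs(1)] by blast+
    moreover have "last xs \<noteq> hd xs"
      using xs \<open>length xs \<ge> 3\<close> by (auto simp: last_conv_nth hd_conv_nth nth_eq_iff_index_eq)
    moreover have "(last xs, hd xs) \<in> E"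
      using step[of "length xs - 1"] xs(1) by (simp add: nth_append last_conv_nth)
    ultimately show ?thesis by (simp add: und_adj_def)
  qed
  ultimately show ?thesis using xs(2) unfolding cycle_list_def by auto
qed

lemma long_nb_walk_cycle_list:
  fixes E :: "('n::finite \<times> 'n) set"
  assumes noloops: "\<forall>i. (i, i) \<notin> E"
    and W: "nb_walk E vs" and len: "length vs > CARD('n)"
  obtains C xs where "C \<in> components E" "cycle_list (und_adj E C) xs"
proof -
  have "card (set vs) \<le> CARD('n)" by (rule card_mono) auto
  then have "\<not> distinct vs" using len distinct_card by fastforce
  then obtain a d where ad: "0 < d" "a + d < length vs" "vs ! a = vs ! (a + d)"
    and dist: "distinct (take d (drop a vs))" by (rule obtain_shortest_repetition)
  define xs where "xs = take d (drop a vs)"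
  have xs: "xs \<noteq> []" "hd xs = vs ! a" using ad unfolding xs_def by (auto simp: hd_drop_conv_nth)
  have "take (a + d - a + 1) (drop a vs) = xs @ [drop a vs ! d]"
    using ad unfolding xs_def by (simp add: take_Suc_conv_app_nth)
  also have "drop a vs ! d = hd xs" using ad xs by simp
  finally have "nb_walk E (xs @ [hd xs])"
    using nb_walk_take_drop[OF W, of a "a + d"] ad by simp
  then have "cycle_list (und_adj E (comp_rel E `` {hd xs})) xs"
    using simple_closed_nb_walk_cycle_list[OF noloops] xs(1) dist unfolding xs_def[symmetric] by blast
  then show ?thesis by (rule that[OF Image_in_components])
qed

lemma no_cycle_list_if_tree:
  assumes "is_tree adj C \<or> is_isolated_node adj C"
  shows "\<not> cycle_list adj xs"
proof
  assume c: "cycle_list adj xs"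
  then have "cycles adj \<noteq> {}" unfolding cycles_def by blast
  then show False using assms c unfolding is_tree_def is_isolated_node_def cycle_list_def by blast
qed

lemma conv_radius_pk_forest:
  fixes E :: "('n::finite \<times> 'n) set"
  assumes noloops: "\<forall>i. (i, i) \<notin> E"
    and forest: "\<forall>C\<in>components E. is_tree (und_adj E C) C \<or> is_isolated_node (und_adj E C) C"
  shows "conv_radius (pk E w) = \<infinity>"
proof -
  have "pk E w k = 0" if "k \<ge> CARD('n)" for k
  proof -
    have "\<not> nb_walk E vs" if "length vs = k + 1" for vs
    proof
      assume "nb_walk E vs"
      moreover have "length vs > CARD('n)" using that \<open>k \<ge> CARD('n)\<close> by simp
      ultimately obtain C xs where "C \<in> components E" "cycle_list (und_adj E C) xs"
        using long_nb_walk_cycle_list[OF noloops] by blast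
      then show False using forest no_cycle_list_if_tree by blast
    qed
    then have "{vs. length vs = k + 1 \<and> nb_walk E vs \<and> hd vs = i \<and> last vs = j} = {}" for i j
      by blast
    then show ?thesis unfolding pk_def by (simp only: vec_eq_iff vec_lambda_beta zero_index sum.empty) simp
  qed
  then have "conv_radius (pk E w) = conv_radius (\<lambda>_. 0 :: real ^'n ^'n)"
    by (intro conv_radius_cong' eventually_sequentiallyI[of "CARD('n)"]) simp
  then show ?thesis by simp
qed

section \<open>Directed cycles and part (b)\<close>

text \<open>A cycle of length \<open>L\<close> is encoded as an \<open>L\<close>-periodic map \<open>c :: int \<Rightarrow> 'n\<close> that is injective
  modulo \<open>L\<close>, so that its neighbours \<open>c (t - 1)\<close>, \<open>c (t + 1)\<close> need no case distinctions.\<close>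

definition cycle_seq :: "(int \<Rightarrow> 'n) \<Rightarrow> nat \<Rightarrow> bool" where
  "cycle_seq c L \<longleftrightarrow> L \<ge> 3 \<and> (\<forall>s t. c s = c t \<longleftrightarrow> s mod int L = t mod int L)"

definition steps_in :: "('n \<times> 'n) set \<Rightarrow> (int \<Rightarrow> 'n) \<Rightarrow> bool" where
  "steps_in R c \<longleftrightarrow> (\<forall>t. (c t, c (t + 1)) \<in> R)"

lemma cycle_seq_eq_iff: "cycle_seq c L \<Longrightarrow> c s = c t \<longleftrightarrow> int L dvd (s - t)"
  unfolding cycle_seq_def by (simp add: mod_eq_dvd_iff)

lemma cycle_seq_length: "cycle_seq c L \<Longrightarrow> L \<ge> 3"
  unfolding cycle_seq_def by simp

lemma cycle_seq_period: "cycle_seq c L \<Longrightarrow> c (s + int L) = c s"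
  by (simp add: cycle_seq_eq_iff)

lemma cycle_seq_shift: "cycle_seq c L \<Longrightarrow> c s = c t \<Longrightarrow> c (s + x) = c (t + x)"
  by (simp add: cycle_seq_eq_iff)

lemma cycle_seq_reach:
  assumes "cycle_seq c L"
  obtains k where "k < L" "c (a + int k) = c b"
proof -
  have L: "int L > 0" using cycle_seq_length[OF assms] by simp
  define k where "k = nat ((b - a) mod int L)"
  have k: "int k = (b - a) mod int L" unfolding k_def using L by simp
  then have "int k < int L" using L by simp
  then have "k < L" by simp
  moreover have "a + int k - b = - (int L * ((b - a) div int L))"
    using k minus_mult_div_eq_mod[of "b - a" "int L"] by linarith
  then have "int L dvd (a + int k - b)" by simp
  ultimately show ?thesis using cycle_seq_eq_iff[OF assms] by (intro that) auto
qed

lemma cycle_seq_neq: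
  assumes "cycle_seq c L" "d \<noteq> 0" "\<bar>d\<bar> < int L"
  shows "c (s + d) \<noteq> c s"
proof
  assume "c (s + d) = c s"
  then have "int L dvd d" using cycle_seq_eq_iff[OF assms(1)] by simp
  from dvd_imp_le_int[OF assms(2) this] assms(3) show False by simp
qed

lemma cycle_seq_neighbours:
  assumes "cycle_seq c L"
  shows "c (s + 1) \<noteq> c s" "c (s + 2) \<noteq> c s" "c (s - 1) \<noteq> c s" "c (s - 1) \<noteq> c (s + 1)"
proof -
  have L: "int L \<ge> 3" using cycle_seq_length[OF assms] by simp
  show "c (s + 1) \<noteq> c s" "c (s + 2) \<noteq> c s" using cycle_seq_neq[OF assms] L by simp_all
  show "c (s - 1) \<noteq> c s" using cycle_seq_neq[OF assms, of "-1" s] L by simp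
  show "c (s - 1) \<noteq> c (s + 1)" using cycle_seq_neq[OF assms, of 2 "s - 1"] L by (simp add: algebra_simps)
qed

definition cyclic_nth :: "'n list \<Rightarrow> int \<Rightarrow> 'n" where
  "cyclic_nth xs t = xs ! nat (t mod int (length xs))"

lemma cyclic_nth_of_nat: "r < length xs \<Longrightarrow> cyclic_nth xs (int r) = xs ! r"
  unfolding cyclic_nth_def by (simp add: nat_mod_as_int[symmetric])

lemma cyclic_nth_in_set: "xs \<noteq> [] \<Longrightarrow> cyclic_nth xs t \<in> set xs"
  unfolding cyclic_nth_def by (simp add: nat_less_iff)

lemma cycle_seq_cyclic_nth:
  assumes "distinct xs" "length xs \<ge> 3"
  shows "cycle_seq (cyclic_nth xs) (length xs)"
  unfolding cycle_seq_def cyclic_nth_def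
proof (intro conjI allI)
  fix s t
  have L: "int (length xs) > 0" using assms(2) by linarith
  then have "xs ! nat (s mod int (length xs)) = xs ! nat (t mod int (length xs))
      \<longleftrightarrow> nat (s mod int (length xs)) = nat (t mod int (length xs))"
    using assms(1) by (simp add: nth_eq_iff_index_eq nat_less_iff)
  also have "\<dots> \<longleftrightarrow> s mod int (length xs) = t mod int (length xs)"
    using L by (simp add: nat_eq_iff2) (metis)
  finally show "xs ! nat (s mod int (length xs)) = xs ! nat (t mod int (length xs))
      \<longleftrightarrow> s mod int (length xs) = t mod int (length xs)" .
qed (use assms in simp)

lemma steps_in_cyclic_nth:
  assumes "is_walk R xs" "xs \<noteq> []" "(last xs, hd xs) \<in> R"
  shows "steps_in R (cyclic_nth xs)"
  unfolding steps_in_def cyclic_nth_def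
proof
  fix t
  define L where "L = int (length xs)"
  have L: "L > 0" "0 \<le> t mod L" "t mod L < L" using assms(2) unfolding L_def by simp_all
  have m1: "(t + 1) mod L = (t mod L + 1) mod L" by (simp add: mod_add_left_eq)
  show "(xs ! nat (t mod L), xs ! nat ((t + 1) mod L)) \<in> R"
  proof (cases "t mod L = L - 1")
    case True
    then have "(t + 1) mod L = 0" "nat (t mod L) = length xs - 1" using m1 unfolding L_def by simp_all
    then show ?thesis using assms(2,3) by (simp add: last_conv_nth hd_conv_nth)
  next
    case False
    then have "(t + 1) mod L = t mod L + 1" using m1 L by (simp add: mod_pos_pos_trivial)
    then have "nat ((t + 1) mod L) = Suc (nat (t mod L))" using L by simp
    moreover have "t mod L + 1 < L" using L(3) False by simp
    then have "Suc (nat (t mod L)) < length xs"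
      using L(2) unfolding L_def by (simp add: Suc_nat_eq_nat_zadd1 nat_less_iff)
    ultimately show ?thesis using assms(1) unfolding is_walk_def by simp
  qed
qed

definition cycle_walk :: "(int \<Rightarrow> 'n) \<Rightarrow> int \<Rightarrow> nat \<Rightarrow> 'n list" where
  "cycle_walk c a n = map (\<lambda>r. c (a + int r)) [0..<Suc n]"

lemma length_cycle_walk [simp]: "length (cycle_walk c a n) = Suc n"
  by (simp add: cycle_walk_def)

lemma nth_cycle_walk: "r \<le> n \<Longrightarrow> cycle_walk c a n ! r = c (a + int r)"
  unfolding cycle_walk_def by (simp del: upt_Suc add: nth_map_upt)

lemma hd_cycle_walk [simp]: "hd (cycle_walk c a n) = c a"
  by (simp add: cycle_walk_def hd_map del: upt_Suc add: upt_conv_Cons)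

lemma last_cycle_walk [simp]: "last (cycle_walk c a n) = c (a + int n)"
proof -
  have "cycle_walk c a n \<noteq> []" by (simp add: cycle_walk_def)
  then show ?thesis using nth_cycle_walk[of n n c a] by (simp add: last_conv_nth)
qed

lemma nb_walk_cycle_walk:
  assumes "cycle_seq c L" "steps_in R c"
  shows "nb_walk R (cycle_walk c a n)"
  unfolding nb_walk_iff is_walk_def no_backtrack_def
proof (intro conjI allI impI)
  show "cycle_walk c a n \<noteq> []" by (simp add: cycle_walk_def)
next
  fix r assume "Suc r < length (cycle_walk c a n)"
  moreover have "(c (a + int r), c (a + int r + 1)) \<in> R" using assms(2) unfolding steps_in_def by blast
  ultimately show "(cycle_walk c a n ! r, cycle_walk c a n ! Suc r) \<in> R"
    by (simp add: nth_cycle_walk algebra_simps)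
next
  fix r assume "Suc (Suc r) < length (cycle_walk c a n)"
  then show "cycle_walk c a n ! Suc (Suc r) \<noteq> cycle_walk c a n ! r"
    using cycle_seq_neighbours(2)[OF assms(1), of "a + int r"] by (simp add: nth_cycle_walk algebra_simps)
qed

text \<open>An edge of a component that is not reversible closes up with a directed path back
  to a directed cycle of length at least 3.\<close>

lemma directed_cycle_through_oneway_edge:
  assumes C: "C \<in> components E" and ab: "a \<in> C" "b \<in> C" "(a, b) \<in> E" "(b, a) \<notin> E"
  obtains d M where "cycle_seq d M" "steps_in E d" "range d \<subseteq> C" "d (int M - 1) = a" "d (int M) = b"
proof -
  obtain ps where ps: "distinct ps" "ps \<noteq> []" "hd ps = b" "last ps = a" "is_walk E ps"
    using component_reach[OF C ab(2,1)] by (rule rtrancl_imp_simple_walk)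
  have "length ps \<ge> 3"
  proof (rule ccontr)
    assume "\<not> length ps \<ge> 3"
    moreover have "length ps \<noteq> 1" "length ps \<noteq> 0" using ps ab by (cases ps; auto)+
    ultimately obtain u v where "ps = [u, v]"
      by (cases ps; cases "tl ps"; cases "tl (tl ps)") auto
    then show False using ps ab(4) by (simp add: is_walk_Cons2)
  qed
  then have "cycle_seq (cyclic_nth ps) (length ps)" using ps(1) by (rule cycle_seq_cyclic_nth[rotated])
  moreover have "steps_in E (cyclic_nth ps)" using ps ab(3) by (intro steps_in_cyclic_nth) auto
  moreover have "range (cyclic_nth ps) \<subseteq> C"
  proof -
    have "set ps \<subseteq> comp_rel E `` {b}"
      using closed_walk_in_component[OF ps(5,2)] ps ab(3) by auto
    moreover have "comp_rel E `` {b} = C" using component_eq_Image[OF C ab(2)] by simp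
    ultimately show ?thesis using cyclic_nth_in_set[OF ps(2)] by blast
  qed
  moreover have "cyclic_nth ps (int (length ps) - 1) = a"
  proof -
    have "cyclic_nth ps (int (length ps) - 1) = cyclic_nth ps (int (length ps - 1))"
      using ps(2) by (cases ps) auto
    also have "\<dots> = ps ! (length ps - 1)" using ps(2) by (intro cyclic_nth_of_nat) simp
    finally show ?thesis using ps(2,4) by (simp add: last_conv_nth)
  qed
  moreover have "cyclic_nth ps (int (length ps)) = b"
    using ps(2,3) by (simp add: cyclic_nth_def hd_conv_nth)
  ultimately show ?thesis by (rule that)
qed

lemma cycle_list_imp_directed_cycle:
  assumes C: "C \<in> components E" and xs: "cycle_list (und_adj E C) xs"
  obtains c L where "cycle_seq c L" "steps_in E c" "range c \<subseteq> C"
proof (cases "(\<forall>r. r + 1 < length xs \<longrightarrow> (xs ! r, xs ! (r + 1)) \<in> E) \<and> (last xs, hd xs) \<in> E")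
  case True
  have "xs \<noteq> []" "distinct xs" "length xs \<ge> 3" using xs unfolding cycle_list_def by auto
  then have "cycle_seq (cyclic_nth xs) (length xs)" by (intro cycle_seq_cyclic_nth)
  moreover have "steps_in E (cyclic_nth xs)"
    using True \<open>xs \<noteq> []\<close> by (intro steps_in_cyclic_nth) (auto simp: is_walk_def)
  moreover have "range (cyclic_nth xs) \<subseteq> C"
    using cyclic_nth_in_set[OF \<open>xs \<noteq> []\<close>] cycle_list_in_component[OF xs] by blast
  ultimately show ?thesis by (rule that)
next
  case False
  then obtain a b where "und_adj E C a b" "(a, b) \<notin> E"
    using xs unfolding cycle_list_def by blast
  then have "b \<in> C" "a \<in> C" "(b, a) \<in> E" "(a, b) \<notin> E" unfolding und_adj_def by auto
  then obtain d M where "cycle_seq d M" "steps_in E d" "range d \<subseteq> C"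
    using directed_cycle_through_oneway_edge[OF C] by blast
  then show ?thesis by (rule that)
qed

lemma conv_radius_pk_le_cycle:
  fixes E :: "('n::finite \<times> 'n) set"
  assumes wpos: "\<forall>e\<in>E. w e > 0" and c: "cycle_seq c L" "steps_in E c"
  shows "conv_radius (pk E w) \<le> ereal (1 / sigma_min E w)"
proof -
  have L: "L > 0" using cycle_seq_length[OF c(1)] by simp
  have "conv_radius (pk E w) \<le> ereal (1 / (root L 1 * sigma_min E w))"
  proof (rule conv_radius_pk_le_of_closed_walks[OF wpos L order_refl])
    fix m :: nat
    have "cycle_walk c 0 (m * L) \<in> {vs. length vs = m * L + 1 \<and> nb_walk E vs \<and> hd vs = c 0 \<and> last vs = c 0}"
      using nb_walk_cycle_walk[OF c] cycle_seq_eq_iff[OF c(1), of "int (m * L)" 0] by simp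
    then show "\<exists>v T. T \<subseteq> {vs. length vs = m * L + 1 \<and> nb_walk E vs \<and> hd vs = v \<and> last vs = v}
        \<and> 1 ^ m \<le> real (card T)"
      by (intro exI[of _ "c 0"] exI[of _ "{cycle_walk c 0 (m * L)}"]) simp
  qed
  then show ?thesis using L by simp
qed

section \<open>Branching closed walks\<close>

definition closed_nb_walk :: "('n \<times> 'n) set \<Rightarrow> 'n \<Rightarrow> 'n list \<Rightarrow> bool" where
  "closed_nb_walk E v X \<longleftrightarrow> nb_walk E X \<and> hd X = v \<and> last X = v \<and> length X \<ge> 2"

text \<open>\<open>X ! 1\<close> is the first and \<open>X ! (length X - 2)\<close> the last vertex of a closed walk \<open>X\<close>
  after and before its base point; \<open>X @ tl Y\<close> is non-backtracking iff they differ.\<close>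

lemma closed_nb_walk_append:
  assumes X: "closed_nb_walk E v X" and Y: "closed_nb_walk E v Y"
    and XY: "X ! (length X - 2) \<noteq> Y ! 1"
  shows "closed_nb_walk E v (X @ tl Y)"
  using assms append_tl_nth_simps[of X Y] nb_walk_append[of E X Y]
  unfolding closed_nb_walk_def by auto

definition gluable :: "('n \<times> 'n) set \<Rightarrow> 'n \<Rightarrow> 'n list set \<Rightarrow> bool" where
  "gluable E v F \<longleftrightarrow> (\<forall>B\<in>F. closed_nb_walk E v B) \<and> (\<forall>B\<in>F. \<forall>B'\<in>F. B ! (length B - 2) \<noteq> B' ! 1)"

fun concat_walks :: "'n \<Rightarrow> 'n list list \<Rightarrow> 'n list" where
  "concat_walks v [] = [v]"
| "concat_walks v (B # Bs) = B @ tl (concat_walks v Bs)"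

lemma concat_walks_gluable:
  assumes F: "gluable E v F" and "set Bs \<subseteq> F" "Bs \<noteq> []"
  shows "closed_nb_walk E v (concat_walks v Bs) \<and> concat_walks v Bs ! 1 = hd Bs ! 1
    \<and> concat_walks v Bs ! (length (concat_walks v Bs) - 2) = last Bs ! (length (last Bs) - 2)"
  using assms(2,3)
proof (induction Bs)
  case (Cons B Bs)
  have B: "closed_nb_walk E v B" using F Cons.prems unfolding gluable_def by simp
  show ?case
  proof (cases "Bs = []")
    case True
    then show ?thesis using B by (simp add: closed_nb_walk_def)
  next
    case False
    then have R: "closed_nb_walk E v (concat_walks v Bs)"
      and R1: "concat_walks v Bs ! 1 = hd Bs ! 1"
      and R2: "concat_walks v Bs ! (length (concat_walks v Bs) - 2) = last Bs ! (length (last Bs) - 2)"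
      using Cons by auto
    have "B ! (length B - 2) \<noteq> hd Bs ! 1"
      using F Cons.prems False unfolding gluable_def by (cases Bs) auto
    then have "B ! (length B - 2) \<noteq> concat_walks v Bs ! 1" using R1 by simp
    then show ?thesis
      using closed_nb_walk_append[OF B R] append_tl_nth_simps[of B "concat_walks v Bs"] R2 B R
        False unfolding closed_nb_walk_def by auto
  qed
qed simp

lemma length_concat_walks:
  "(\<forall>B\<in>set Bs. B \<noteq> []) \<Longrightarrow> length (concat_walks v Bs) = 1 + (\<Sum>B\<leftarrow>Bs. length B - 1)"
  by (induction Bs) auto

lemma length_concat_walks_replicate:
  "B \<noteq> [] \<Longrightarrow> length (concat_walks v (replicate n B)) = n * (length B - 1) + 1"
  using length_concat_walks[of "replicate n B" v] by (simp add: sum_list_replicate)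

lemma concat_walks_nth_length:
  assumes F: "gluable E v F" and Bs: "set (B # Bs) \<subseteq> F" "Bs \<noteq> []"
  shows "concat_walks v (B # Bs) ! length B = hd Bs ! 1"
proof -
  have R: "closed_nb_walk E v (concat_walks v Bs)" "concat_walks v Bs ! 1 = hd Bs ! 1"
    using concat_walks_gluable[OF F _ Bs(2)] Bs(1) by auto
  have "closed_nb_walk E v B" using F Bs(1) unfolding gluable_def by simp
  then show ?thesis
    using R append_tl_nth_simps(3)[of B "concat_walks v Bs"] unfolding closed_nb_walk_def by simp
qed

lemma concat_walks_not_Nil: "(\<forall>B\<in>set Bs. B \<noteq> []) \<Longrightarrow> concat_walks v Bs \<noteq> []"
  by (induction Bs) auto

lemma hd_concat_walks: "(\<forall>B\<in>set Bs. B \<noteq> [] \<and> hd B = v) \<Longrightarrow> hd (concat_walks v Bs) = v"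
  by (induction Bs) auto

lemma concat_walks_inj:
  assumes "\<forall>B\<in>F. length B = n \<and> B \<noteq> [] \<and> hd B = v"
  shows "inj_on (concat_walks v) {Bs. set Bs \<subseteq> F \<and> length Bs = m}"
proof -
  have "Bs = Cs" if "set Bs \<subseteq> F" "set Cs \<subseteq> F" "length Bs = length Cs"
    "concat_walks v Bs = concat_walks v Cs" for Bs Cs
    using that
  proof (induction Bs arbitrary: Cs)
    case (Cons B Bs)
    then obtain C Cs' where Cs: "Cs = C # Cs'" by (cases Cs) auto
    have "length B = length C" using Cons.prems Cs assms by simp
    then have "B = C" and tl: "tl (concat_walks v Bs) = tl (concat_walks v Cs')"
      using Cons.prems(4) Cs by (simp_all add: append_eq_append_conv)
    moreover have "concat_walks v Bs \<noteq> []" "concat_walks v Cs' \<noteq> []"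
      using Cons.prems Cs assms by (auto intro!: concat_walks_not_Nil)
    moreover have "hd (concat_walks v Bs) = v" "hd (concat_walks v Cs') = v"
      using Cons.prems Cs assms by (auto intro!: hd_concat_walks)
    ultimately have "concat_walks v Bs = concat_walks v Cs'" by (metis list.collapse)
    then show ?case using Cons Cs \<open>B = C\<close> by simp
  qed simp
  then show ?thesis by (intro inj_onI) auto
qed

lemma card_concat_walks_words:
  assumes g: "gluable E v {U, W}" and UW: "U \<noteq> W" and len: "length U = K + 1" "length W = K + 1"
    and m: "m \<ge> 1"
  shows "\<exists>T. T \<subseteq> {vs. length vs = m * K + 1 \<and> nb_walk E vs \<and> hd vs = v \<and> last vs = v}
    \<and> card T = 2 ^ m"
proof -
  have UWv: "\<forall>B\<in>{U, W}. length B = K + 1 \<and> B \<noteq> [] \<and> hd B = v"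
    using g len unfolding gluable_def closed_nb_walk_def by auto
  define T where "T = concat_walks v ` {Bs. set Bs \<subseteq> {U, W} \<and> length Bs = m}"
  have "T \<subseteq> {vs. length vs = m * K + 1 \<and> nb_walk E vs \<and> hd vs = v \<and> last vs = v}"
  proof
    fix vs assume "vs \<in> T"
    then obtain Bs where Bs: "set Bs \<subseteq> {U, W}" "length Bs = m" "vs = concat_walks v Bs"
      unfolding T_def by blast
    have "map (\<lambda>B. length B - 1) Bs = replicate m K"
      using Bs len by (intro replicate_eqI) auto
    then have "length vs = m * K + 1"
      using length_concat_walks[of Bs v] Bs UWv by (auto simp: sum_list_replicate)
    moreover have "Bs \<noteq> []" using Bs(2) m by auto
    then have "closed_nb_walk E v vs" using concat_walks_gluable[OF g Bs(1)] Bs(3) by simp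
    ultimately show "vs \<in> {vs. length vs = m * K + 1 \<and> nb_walk E vs \<and> hd vs = v \<and> last vs = v}"
      unfolding closed_nb_walk_def by simp
  qed
  moreover have "card T = 2 ^ m"
    using card_image[OF concat_walks_inj[OF UWv]] card_lists_length_eq[of "{U, W}" m] UW
    unfolding T_def by (simp add: numeral_2_eq_2)
  ultimately show ?thesis by blast
qed

text \<open>Two closed walks at \<open>v\<close> that leave \<open>v\<close> along different edges and may follow each other
  in the orders \<open>X X\<close>, \<open>X Y\<close> and \<open>Y X\<close>.\<close>

definition branching :: "('n \<times> 'n) set \<Rightarrow> 'n \<Rightarrow> 'n list \<Rightarrow> 'n list \<Rightarrow> bool" where
  "branching E v X Y \<longleftrightarrow> closed_nb_walk E v X \<and> closed_nb_walk E v Y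
     \<and> X ! (length X - 2) \<noteq> X ! 1 \<and> X ! (length X - 2) \<noteq> Y ! 1
     \<and> Y ! (length Y - 2) \<noteq> X ! 1 \<and> X ! 1 \<noteq> Y ! 1"

text \<open>With \<open>a + 1\<close>, \<open>b + 1\<close> the lengths of \<open>X\<close>, \<open>Y\<close>, the walks \<open>X\<^sup>a\<^sup>+\<^sup>b\<close> and \<open>(X Y)\<^sup>a\<close> have
  the same length \<open>a (a + b) + 1\<close>, differ after \<open>a + 1\<close> steps, and can be glued in any order.\<close>

lemma branching_equal_length_walks:
  assumes br: "branching E v X Y"
  obtains U W K where "K > 0" "gluable E v {U, W}" "U \<noteq> W" "length U = K + 1" "length W = K + 1"
proof -
  define a where "a = length X - 1"
  define b where "b = length Y - 1"
  have X: "closed_nb_walk E v X" and Y: "closed_nb_walk E v Y"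
    and j: "X ! (length X - 2) \<noteq> X ! 1" "X ! (length X - 2) \<noteq> Y ! 1"
      "Y ! (length Y - 2) \<noteq> X ! 1" "X ! 1 \<noteq> Y ! 1"
    using br unfolding branching_def by auto
  have a: "a \<ge> 1" "length X = a + 1" and b: "b \<ge> 1" "length Y = b + 1"
    using X Y unfolding a_def b_def closed_nb_walk_def by auto
  define Z where "Z = X @ tl Y"
  have Z: "closed_nb_walk E v Z" unfolding Z_def by (rule closed_nb_walk_append[OF X Y j(2)])
  have Zi: "Z ! 1 = X ! 1" "Z ! (length Z - 2) = Y ! (length Y - 2)" "Z ! (a + 1) = Y ! 1"
    "length Z = a + b + 1"
    using append_tl_nth_simps[of X Y] X Y a b unfolding Z_def closed_nb_walk_def by auto
  have g1: "gluable E v {X, Z}" unfolding gluable_def using X Z Zi j by auto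
  define U where "U = concat_walks v (replicate (a + b) X)"
  define W where "W = concat_walks v (replicate a Z)"
  have ne: "replicate (a + b) X \<noteq> []" "replicate a Z \<noteq> []" using a by auto
  have sub: "set (replicate (a + b) X) \<subseteq> {X, Z}" "set (replicate a Z) \<subseteq> {X, Z}" by auto
  have U: "closed_nb_walk E v U" "U ! (length U - 2) = X ! (length X - 2)"
    and W: "closed_nb_walk E v W" "W ! (length W - 2) = Y ! (length Y - 2)"
    and first: "U ! 1 = X ! 1" "W ! 1 = X ! 1"
    using concat_walks_gluable[OF g1 sub(1) ne(1)] concat_walks_gluable[OF g1 sub(2) ne(2)] Zi ne
    unfolding U_def W_def by (auto simp: last_replicate)
  have "X \<noteq> []" "Z \<noteq> []" using a Zi by auto
  then have len: "length U = a * (a + b) + 1" "length W = a * (a + b) + 1"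
    using length_concat_walks_replicate[of X v "a + b"] length_concat_walks_replicate[of Z v a] a Zi
    unfolding U_def W_def by (auto simp: algebra_simps)
  have "U ! (a + 1) = X ! 1"
  proof -
    have "U = concat_walks v (X # replicate (a + b - 1) X)" unfolding U_def using a by (cases "a + b") auto
    then show ?thesis using concat_walks_nth_length[OF g1, of X "replicate (a + b - 1) X"] a b by auto
  qed
  moreover have "W ! (a + 1) = Y ! 1"
  proof -
    have "W = Z @ tl (concat_walks v (replicate (a - 1) Z))" unfolding W_def using a by (cases a) auto
    then show ?thesis using Zi b by (simp add: nth_append)
  qed
  ultimately have "U \<noteq> W" using j(4) by auto
  moreover have "gluable E v {U, W}" unfolding gluable_def using U W first j by auto
  moreover have "a * (a + b) > 0" using a b by simp
  ultimately show ?thesis using len by (intro that[of "a * (a + b)" U W]) simp_all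
qed

lemma conv_radius_pk_lt_if_branching:
  fixes E :: "('n::finite \<times> 'n) set"
  assumes wpos: "\<forall>e\<in>E. w e > 0" and br: "branching E v X Y"
  shows "conv_radius (pk E w) < ereal (1 / sigma_min E w)"
proof -
  obtain U W K where K: "K > 0" and UW: "gluable E v {U, W}" "U \<noteq> W"
    "length U = K + 1" "length W = K + 1"
    using branching_equal_length_walks[OF br] by blast
  have "conv_radius (pk E w) \<le> ereal (1 / (root K 2 * sigma_min E w))"
  proof (rule conv_radius_pk_le_of_closed_walks[OF wpos K])
    fix m :: nat assume "m \<ge> 1"
    then obtain T where "T \<subseteq> {vs. length vs = m * K + 1 \<and> nb_walk E vs \<and> hd vs = v \<and> last vs = v}"
      "card T = 2 ^ m" using card_concat_walks_words[OF UW] by blast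
    then show "\<exists>v T. T \<subseteq> {vs. length vs = m * K + 1 \<and> nb_walk E vs \<and> hd vs = v \<and> last vs = v}
        \<and> 2 ^ m \<le> real (card T)" by (intro exI[of _ v] exI[of _ T]) simp
  qed simp
  also have "\<dots> < ereal (1 / sigma_min E w)"
  proof -
    have X: "closed_nb_walk E v X" "X ! (length X - 2) \<noteq> X ! 1"
      using br unfolding branching_def by auto
    then have "closed_nb_walk E v (X @ tl X)" by (intro closed_nb_walk_append)
    then have "sigma_min E w > 0"
      using X(1) sigma_min_pos_if_long_nb_walk[OF wpos, of "X @ tl X"]
      unfolding closed_nb_walk_def by auto
    moreover have "root K 2 > 1" using K by simp
    ultimately show ?thesis by (simp add: divide_strict_left_mono)
  qed
  finally show ?thesis .
qed

section \<open>Detours from a cycle\<close>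

definition cycle_edge :: "(int \<Rightarrow> 'n) \<Rightarrow> 'n \<Rightarrow> 'n \<Rightarrow> bool" where
  "cycle_edge c a b \<longleftrightarrow> (\<exists>t. (a = c t \<and> b = c (t + 1)) \<or> (b = c t \<and> a = c (t + 1)))"

lemma cycle_edge_sym: "cycle_edge c a b \<longleftrightarrow> cycle_edge c b a"
  unfolding cycle_edge_def by blast

lemma cycle_edge_in_range: "cycle_edge c a b \<Longrightarrow> a \<in> range c \<and> b \<in> range c"
  unfolding cycle_edge_def by auto

definition detour :: "(int \<Rightarrow> 'n) \<Rightarrow> ('n \<times> 'n) set \<Rightarrow> 'n list \<Rightarrow> bool" where
  "detour c R P \<longleftrightarrow> nb_walk R P \<and> hd P \<in> range c \<and> last P \<in> range c \<and> length P \<ge> 2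
     \<and> (\<forall>r. 0 < r \<and> r < length P - 1 \<longrightarrow> P ! r \<notin> range c)
     \<and> (length P = 2 \<longrightarrow> \<not> cycle_edge c (P ! 0) (P ! 1))"

lemma ex_first_after:
  fixes j t :: nat
  assumes "Q j" "t \<le> j"
  shows "\<exists>e. t \<le> e \<and> e \<le> j \<and> Q e \<and> (\<forall>u. t \<le> u \<and> u < e \<longrightarrow> \<not> Q u)"
proof -
  define e where "e = (LEAST u. t \<le> u \<and> Q u)"
  have "t \<le> e \<and> Q e" unfolding e_def by (rule LeastI[of _ j]) (use assms in simp)
  moreover have "e \<le> j" unfolding e_def by (rule Least_le) (use assms in simp)
  moreover have "\<forall>u. t \<le> u \<and> u < e \<longrightarrow> \<not> Q u" unfolding e_def using not_less_Least by blast
  ultimately show ?thesis by blast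
qed

lemma ex_last_before:
  fixes s0 t :: nat
  assumes "Q s0" "s0 \<le> t"
  shows "\<exists>s. s0 \<le> s \<and> s \<le> t \<and> Q s \<and> (\<forall>u. s < u \<and> u \<le> t \<longrightarrow> \<not> Q u)"
proof -
  define S where "S = {u. s0 \<le> u \<and> u \<le> t \<and> Q u}"
  have "finite S" "s0 \<in> S" unfolding S_def using assms by auto
  then have M: "Max S \<in> S" "\<And>u. u \<in> S \<Longrightarrow> u \<le> Max S" by (auto intro: Max_in)
  have "\<not> Q u" if "Max S < u" "u \<le> t" for u
  proof
    assume "Q u"
    then have "u \<in> S" using M(1) that unfolding S_def by auto
    then show False using M(2) that(1) by fastforce
  qed
  then show ?thesis using M(1) unfolding S_def by blast
qed

lemma detour_segment:
  assumes W: "nb_walk R W" and se: "s < e" "e < length W" "W ! s \<in> range c" "W ! e \<in> range c"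
    and inner: "\<forall>u. s < u \<and> u < e \<longrightarrow> W ! u \<notin> range c"
    and step: "e = Suc s \<Longrightarrow> \<not> cycle_edge c (W ! s) (W ! e)"
  shows "detour c R (take (e - s + 1) (drop s W))"
proof -
  define P where "P = take (e - s + 1) (drop s W)"
  have lP: "length P = e - s + 1" and nP: "\<And>r. r < length P \<Longrightarrow> P ! r = W ! (s + r)"
    unfolding P_def using se by auto
  have "P \<noteq> []" using lP by auto
  then have "hd P = W ! s" "last P = W ! e"
    using nP[of 0] nP[of "length P - 1"] lP se by (simp_all add: hd_conv_nth last_conv_nth)
  moreover have "nb_walk R P" unfolding P_def using se by (intro nb_walk_take_drop[OF W]) auto
  moreover have "P ! r \<notin> range c" if "0 < r" "r < length P - 1" for r
    using that nP[of r] inner lP by simp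
  moreover have "\<not> cycle_edge c (P ! 0) (P ! 1)" if "length P = 2"
    using that step nP[of 0] nP[of 1] lP se by simp
  ultimately show ?thesis unfolding P_def[symmetric] detour_def using lP se by auto
qed

text \<open>A non-backtracking walk between vertices of \<open>c\<close> that does not just run along \<open>c\<close> contains
  a detour: from a vertex off the cycle, or from a step that is not an edge of \<open>c\<close>, go back to
  the last and forward to the first visit of \<open>c\<close>.\<close>

lemma nb_walk_contains_detour:
  assumes W: "nb_walk R W" and ends: "hd W \<in> range c" "last W \<in> range c"
    and off: "(\<exists>t < length W. W ! t \<notin> range c) \<or>
      (\<exists>t. Suc t < length W \<and> W ! t \<in> range c \<and> W ! Suc t \<in> range c \<and> \<not> cycle_edge c (W ! t) (W ! Suc t))"
  shows "\<exists>P. detour c R P"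
  using off
proof
  assume "\<exists>t < length W. W ! t \<notin> range c"
  then obtain t where t: "t < length W" "W ! t \<notin> range c" by blast
  have W0: "W ! 0 \<in> range c" and Wl: "W ! (length W - 1) \<in> range c"
    using ends W by (auto simp: hd_conv_nth last_conv_nth nb_walk_def)
  obtain s where s: "s \<le> t" "W ! s \<in> range c" "\<forall>u. s < u \<and> u \<le> t \<longrightarrow> W ! u \<notin> range c"
    using ex_last_before[of "\<lambda>u. W ! u \<in> range c" 0 t] W0 by auto
  have "t \<le> length W - 1" using t by simp
  then obtain e where e: "t \<le> e" "e \<le> length W - 1" "W ! e \<in> range c"
    "\<forall>u. t \<le> u \<and> u < e \<longrightarrow> W ! u \<notin> range c"
    using ex_first_after[of "\<lambda>u. W ! u \<in> range c", OF Wl] by blast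
  have "s \<noteq> t" "t \<noteq> e" using s e t by auto
  then have "s < t" "t < e" using s(1) e(1) by simp_all
  have "detour c R (take (e - s + 1) (drop s W))"
  proof (rule detour_segment[OF W])
    show "\<forall>u. s < u \<and> u < e \<longrightarrow> W ! u \<notin> range c"
    proof (intro allI impI)
      fix u assume "s < u \<and> u < e"
      then show "W ! u \<notin> range c" using s(3) e(4) by (cases "u \<le> t") auto
    qed
  qed (use s e t \<open>s < t\<close> \<open>t < e\<close> in auto)
  then show ?thesis by blast
next
  assume "\<exists>t. Suc t < length W \<and> W ! t \<in> range c \<and> W ! Suc t \<in> range c
    \<and> \<not> cycle_edge c (W ! t) (W ! Suc t)"
  then obtain t where "Suc t < length W" "W ! t \<in> range c" "W ! Suc t \<in> range c"
    "\<not> cycle_edge c (W ! t) (W ! Suc t)" by blast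
  then have "detour c R (take (Suc t - t + 1) (drop t W))" by (intro detour_segment[OF W]) auto
  then show ?thesis by blast
qed

lemma cycle_meeting_cycle_detour:
  assumes d: "cycle_seq d M" "steps_in R d" and meet: "d q \<in> range c"
    and off: "\<not> cycle_edge c (d p) (d (p + 1))"
  shows "\<exists>P. detour c R P"
proof -
  define W where "W = cycle_walk d q M"
  obtain t where t: "t < M" "d (q + int t) = d p" by (rule cycle_seq_reach[OF d(1)])
  have "W ! t = d (q + int t)" "W ! Suc t = d (q + int t + 1)" "Suc t < length W"
    unfolding W_def using t by (simp_all add: nth_cycle_walk algebra_simps)
  then have Wt: "W ! t = d p" "W ! Suc t = d (p + 1)" "Suc t < length W"
    using t(2) cycle_seq_shift[OF d(1) t(2), of 1] by simp_all
  have "nb_walk R W" unfolding W_def by (rule nb_walk_cycle_walk[OF d])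
  moreover have "hd W \<in> range c" "last W \<in> range c"
    unfolding W_def using meet cycle_seq_period[OF d(1), of q] by simp_all
  moreover have "(\<exists>t < length W. W ! t \<notin> range c) \<or>
      (\<exists>t. Suc t < length W \<and> W ! t \<in> range c \<and> W ! Suc t \<in> range c \<and> \<not> cycle_edge c (W ! t) (W ! Suc t))"
  proof (cases "d p \<in> range c \<and> d (p + 1) \<in> range c")
    case False
    then show ?thesis using Wt by (metis Suc_lessD)
  qed (use Wt off in auto)
  ultimately show ?thesis by (rule nb_walk_contains_detour)
qed

lemma undirected_detour_imp_detour:
  assumes D: "detour c {(x, y). und_adj E C x y} P"
    and rev: "\<forall>a b. a \<in> C \<longrightarrow> b \<in> C \<longrightarrow> (a, b) \<in> E \<longrightarrow> \<not> cycle_edge c a b \<longrightarrow> (b, a) \<in> E"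
  shows "detour c E P"
proof -
  have P: "nb_walk {(x, y). und_adj E C x y} P" "length P \<ge> 2"
    "\<And>r. 0 < r \<Longrightarrow> r < length P - 1 \<Longrightarrow> P ! r \<notin> range c"
    "length P = 2 \<Longrightarrow> \<not> cycle_edge c (P ! 0) (P ! 1)" using D unfolding detour_def by auto
  have "(P ! r, P ! Suc r) \<in> E" if r: "Suc r < length P" for r
  proof -
    have ua: "und_adj E C (P ! r) (P ! Suc r)"
      using P(1) r unfolding nb_walk_iff is_walk_def by auto
    have off: "\<not> cycle_edge c (P ! r) (P ! Suc r)"
    proof (cases "length P = 2")
      case True
      then show ?thesis using P(4) r by simp
    next
      case False
      have "P ! r \<notin> range c \<or> P ! Suc r \<notin> range c"
      proof (cases "r = 0")
        case True
        then show ?thesis using P(3)[of 1] P(2) False by simp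
      next
        case False
        then show ?thesis using P(3)[of r] r by simp
      qed
      then show ?thesis using cycle_edge_in_range by metis
    qed
    show ?thesis
    proof (rule ccontr)
      assume "(P ! r, P ! Suc r) \<notin> E"
      then have "(P ! Suc r, P ! r) \<in> E" "P ! r \<in> C" "P ! Suc r \<in> C"
        using ua unfolding und_adj_def by auto
      moreover have "\<not> cycle_edge c (P ! Suc r) (P ! r)" using off cycle_edge_sym by metis
      ultimately show False using rev \<open>(P ! r, P ! Suc r) \<notin> E\<close> by blast
    qed
  qed
  then have "nb_walk E P" using P(1) unfolding nb_walk_iff is_walk_def by blast
  then show ?thesis using D unfolding detour_def by blast
qed

lemma simple_walk_crossing:
  assumes ps: "distinct ps" "ps \<noteq> []" "is_walk E ps" "hd ps \<in> S" "last ps \<in> T" and ST: "S \<inter> T = {}"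
  obtains Q where "nb_walk E Q" "hd Q \<in> S" "last Q \<in> T" "length Q \<ge> 2"
    "Q ! 1 \<notin> S" "Q ! (length Q - 2) \<notin> T"
proof -
  have p0: "ps ! 0 \<in> S" and pl: "ps ! (length ps - 1) \<in> T"
    using ps by (auto simp: hd_conv_nth last_conv_nth)
  obtain e where e: "e \<le> length ps - 1" "ps ! e \<in> T" "\<forall>u. u < e \<longrightarrow> ps ! u \<notin> T"
    using ex_first_after[of "\<lambda>u. ps ! u \<in> T" "length ps - 1" 0, OF pl] by auto
  obtain s where s: "s \<le> e" "ps ! s \<in> S" "\<forall>u. s < u \<and> u \<le> e \<longrightarrow> ps ! u \<notin> S"
    using ex_last_before[of "\<lambda>u. ps ! u \<in> S" 0 e, OF p0] by auto
  have se: "s < e" "e < length ps" using s e ST ps(2) by (cases "s = e"; auto)+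
  define Q where "Q = take (e - s + 1) (drop s ps)"
  have lQ: "length Q = e - s + 1" and nQ: "\<And>r. r < length Q \<Longrightarrow> Q ! r = ps ! (s + r)"
    unfolding Q_def using se by auto
  have "Q \<noteq> []" using lQ by auto
  have "nb_walk E Q" unfolding Q_def
    by (rule nb_walk_take_drop[OF distinct_walk_imp_nb_walk[OF ps(1-3)]]) (use se in auto)
  moreover have "hd Q \<in> S" "last Q \<in> T" using \<open>Q \<noteq> []\<close>
    using nQ[of 0] nQ[of "length Q - 1"] lQ s e se by (simp_all add: hd_conv_nth last_conv_nth)
  moreover have "Q ! 1 \<notin> S" "Q ! (length Q - 2) \<notin> T"
    using nQ[of 1] nQ[of "length Q - 2"] lQ s(3) e(3) se by auto
  ultimately show ?thesis using lQ se by (intro that) auto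
qed

lemma obtain_walk_along_cycle:
  assumes d: "cycle_seq d M" "steps_in E d"
  obtains A where "nb_walk E A" "hd A = d a" "last A = d b" "length A \<ge> 2" "A ! 1 = d (a + 1)"
    "A ! (length A - 2) \<in> range d"
proof -
  obtain k where k: "k < M" "d (a + int k) = d b" by (rule cycle_seq_reach[OF d(1)])
  have M: "M \<ge> 3" by (rule cycle_seq_length[OF d(1)])
  show ?thesis
  proof (rule that[of "cycle_walk d a (k + M)"])
    show "last (cycle_walk d a (k + M)) = d b"
      using cycle_seq_shift[OF d(1) k(2), of "int M"] cycle_seq_period[OF d(1), of b]
      by (simp add: add.assoc)
  qed (use nb_walk_cycle_walk[OF d] M in \<open>simp_all add: nth_cycle_walk\<close>)
qed

text \<open>Two disjoint directed cycles of one component are joined by a detour from the first: walk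
  to the second, once around it, and back.\<close>

lemma disjoint_cycles_detour:
  assumes C: "C \<in> components E"
    and c: "cycle_seq c L" "range c \<subseteq> C"
    and d: "cycle_seq d M" "steps_in E d" "range d \<subseteq> C" and disj: "range c \<inter> range d = {}"
  shows "\<exists>P. detour c E P"
proof -
  have cd: "c 0 \<in> C" "d 0 \<in> C" using c(2) d(3) by auto
  obtain ps1 where ps1: "distinct ps1" "ps1 \<noteq> []" "hd ps1 = c 0" "last ps1 = d 0" "is_walk E ps1"
    using component_reach[OF C cd] by (rule rtrancl_imp_simple_walk)
  obtain ps2 where ps2: "distinct ps2" "ps2 \<noteq> []" "hd ps2 = d 0" "last ps2 = c 0" "is_walk E ps2"
    using component_reach[OF C cd(2,1)] by (rule rtrancl_imp_simple_walk)
  obtain Q1 where Q1: "nb_walk E Q1" "hd Q1 \<in> range c" "last Q1 \<in> range d" "length Q1 \<ge> 2"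
    "Q1 ! 1 \<notin> range c" "Q1 ! (length Q1 - 2) \<notin> range d"
    by (rule simple_walk_crossing[OF ps1(1,2,5), where S = "range c" and T = "range d"])
      (use ps1 disj in auto)
  obtain Q2 where Q2: "nb_walk E Q2" "hd Q2 \<in> range d" "last Q2 \<in> range c" "length Q2 \<ge> 2"
    "Q2 ! 1 \<notin> range d" "Q2 ! (length Q2 - 2) \<notin> range c"
    by (rule simple_walk_crossing[OF ps2(1,2,5), where S = "range d" and T = "range c"])
      (use ps2 disj in auto)
  obtain a b where ab: "last Q1 = d a" "hd Q2 = d b" using Q1(3) Q2(2) by auto
  obtain A where A: "nb_walk E A" "hd A = d a" "last A = d b" "length A \<ge> 2" "A ! 1 = d (a + 1)"
    "A ! (length A - 2) \<in> range d"
    by (rule obtain_walk_along_cycle[OF d(1,2)])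
  define W1 where "W1 = Q1 @ tl A"
  have W1: "nb_walk E W1" "length W1 \<ge> 2" "hd W1 = hd Q1" "last W1 = d b"
    "W1 ! (length W1 - 2) = A ! (length A - 2)"
    unfolding W1_def using nb_walk_append[OF Q1(1) A(1)] append_tl_nth_simps[OF Q1(4) A(4)]
      Q1 A ab by auto
  have W1Q1: "W1 ! (length Q1 - 1) = last Q1" "length Q1 - 1 < length W1"
  proof -
    have "Q1 \<noteq> []" using Q1(4) by auto
    then show "W1 ! (length Q1 - 1) = last Q1" "length Q1 - 1 < length W1"
      unfolding W1_def using A(4) by (auto simp: nth_append last_conv_nth)
  qed
  define W where "W = W1 @ tl Q2"
  have "W1 ! (length W1 - 2) \<noteq> Q2 ! 1" using W1(5) A(6) Q2(5) by metis
  then have "nb_walk E W" unfolding W_def using nb_walk_append[OF W1(1) Q2(1)] W1(4) ab by simp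
  moreover have "hd W \<in> range c" "last W \<in> range c"
    unfolding W_def using append_tl_nth_simps[OF W1(2) Q2(4)] W1 Q1 Q2 ab by auto
  moreover have "W ! (length Q1 - 1) \<notin> range c" "length Q1 - 1 < length W"
    unfolding W_def using W1Q1 Q1(3) disj by (auto simp: nth_append)
  ultimately show ?thesis by (intro nb_walk_contains_detour) auto
qed

lemma closed_nb_walk_cycle_round:
  assumes c: "cycle_seq c L" "steps_in E c"
  shows "closed_nb_walk E (c i) (cycle_walk c i L)"
    and "cycle_walk c i L ! 1 = c (i + 1)"
    and "cycle_walk c i L ! (length (cycle_walk c i L) - 2) = c (i - 1)"
proof -
  have L: "L \<ge> 3" by (rule cycle_seq_length[OF c(1)])
  show "closed_nb_walk E (c i) (cycle_walk c i L)"
    using nb_walk_cycle_walk[OF c] cycle_seq_period[OF c(1), of i] L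
    unfolding closed_nb_walk_def by simp
  show "cycle_walk c i L ! 1 = c (i + 1)" using L nth_cycle_walk[of 1 L c i] by simp
  have "cycle_walk c i L ! (length (cycle_walk c i L) - 2) = c (i - 1 + int L)"
    using L nth_cycle_walk[of "L - 1" L c i] by (simp add: of_nat_diff algebra_simps)
  then show "cycle_walk c i L ! (length (cycle_walk c i L) - 2) = c (i - 1)"
    using cycle_seq_period[OF c(1), of "i - 1"] by simp
qed

lemma detour_steps_off_cycle:
  assumes c: "cycle_seq c L" and D: "detour c R P" and ij: "hd P = c i" "last P = c j"
  shows "P ! 1 \<noteq> c (i + 1)" "P ! 1 \<noteq> c (i - 1)"
    and "P ! (length P - 2) \<noteq> c (j + 1)" "P ! (length P - 2) \<noteq> c (j - 1)"
proof -
  have P: "length P \<ge> 2" "\<And>r. 0 < r \<Longrightarrow> r < length P - 1 \<Longrightarrow> P ! r \<notin> range c"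
    "length P = 2 \<Longrightarrow> \<not> cycle_edge c (P ! 0) (P ! 1)" using D unfolding detour_def by auto
  have "P ! 1 \<notin> {c (i + 1), c (i - 1)} \<and> P ! (length P - 2) \<notin> {c (j + 1), c (j - 1)}"
  proof (cases "length P = 2")
    case True
    moreover have "P \<noteq> []" using P(1) by auto
    ultimately have "P ! 0 = c i" "P ! 1 = c j" "P ! (length P - 2) = c i"
      using ij by (simp_all add: hd_conv_nth last_conv_nth)
    moreover have "\<not> cycle_edge c (c i) (c j)" using P(3) True \<open>P ! 0 = c i\<close> \<open>P ! 1 = c j\<close> by simp
    ultimately show ?thesis unfolding cycle_edge_def
      by (auto dest: spec[of _ i] spec[of _ "i - 1"] spec[of _ j] spec[of _ "j - 1"])
  next
    case False
    then have "length P \<ge> 3" using P(1) by simp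
    then have "P ! 1 \<notin> range c" "P ! (length P - 2) \<notin> range c"
      using P(2)[of 1] P(2)[of "length P - 2"] by simp_all
    then show ?thesis by auto
  qed
  then show "P ! 1 \<noteq> c (i + 1)" "P ! 1 \<noteq> c (i - 1)"
    and "P ! (length P - 2) \<noteq> c (j + 1)" "P ! (length P - 2) \<noteq> c (j - 1)" by auto
qed

text \<open>A detour from \<open>c i\<close> to \<open>c j\<close>, continued along \<open>c\<close> back to \<open>c i\<close>, and the round trip
  along \<open>c\<close> from \<open>c i\<close> are branching closed walks.\<close>

lemma detour_imp_branching:
  assumes noloops: "\<forall>i. (i, i) \<notin> E" and c: "cycle_seq c L" "steps_in E c"
    and D: "detour c E P"
  obtains v X Y where "branching E v X Y"
proof -
  have P: "nb_walk E P" "hd P \<in> range c" "last P \<in> range c" "length P \<ge> 2"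
    using D unfolding detour_def by auto
  obtain i j where ij: "hd P = c i" "last P = c j" using P(2,3) by auto
  note off = detour_steps_off_cycle[OF c(1) D ij]
  define X where "X = cycle_walk c i L"
  note X = closed_nb_walk_cycle_round[OF c, of i, folded X_def]
  have Xi: "X ! (length X - 2) \<noteq> X ! 1" using X cycle_seq_neighbours(4)[OF c(1)] by simp
  obtain k where k: "k < L" "c (j + int k) = c i" by (rule cycle_seq_reach[OF c(1)])
  show ?thesis
  proof (cases "k = 0")
    case True
    then have "c j = c i" using k by simp
    have "closed_nb_walk E (c i) P" using P ij \<open>c j = c i\<close> unfolding closed_nb_walk_def by simp
    moreover have "P ! (length P - 2) \<noteq> c (i + 1)"
      using off(3) cycle_seq_shift[OF c(1) \<open>c j = c i\<close>, of 1] by simp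
    ultimately have "branching E (c i) X P" unfolding branching_def using X Xi off by simp
    then show ?thesis by (rule that)
  next
    case False
    define A where "A = cycle_walk c j k"
    have A: "nb_walk E A" "hd A = c j" "last A = c i" "length A \<ge> 2" "A ! 1 = c (j + 1)"
      "A ! (length A - 2) = c (i - 1)"
      unfolding A_def using nb_walk_cycle_walk[OF c] k False nth_cycle_walk[of 1 k c j]
        nth_cycle_walk[of "k - 1" k c j] cycle_seq_shift[OF c(1) k(2), of "-1"]
      by (simp_all add: of_nat_diff algebra_simps)
    define Y where "Y = P @ tl A"
    have "nb_walk E Y" unfolding Y_def using nb_walk_append[OF P(1) A(1)] ij A off(3) by simp
    then have "closed_nb_walk E (c i) Y" "Y ! 1 = P ! 1" "Y ! (length Y - 2) = c (i - 1)"
      unfolding Y_def closed_nb_walk_def using append_tl_nth_simps[OF P(4) A(4)] ij A P(4) by auto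
    then have "branching E (c i) X Y"
      unfolding branching_def using X Xi off cycle_seq_neighbours(4)[OF c(1)] by simp
    then show ?thesis by (rule that)
  qed
qed

section \<open>A second cycle yields a detour: part (c)\<close>

definition cycle_trace :: "(int \<Rightarrow> 'n) \<Rightarrow> nat \<Rightarrow> int \<Rightarrow> int \<Rightarrow> 'n list" where
  "cycle_trace c L b \<delta> = map (\<lambda>r. c (b + \<delta> * int r)) [0..<L]"

definition rot_rev_class :: "'n list \<Rightarrow> 'n list set" where
  "rot_rev_class xs = {ys. \<exists>k. ys = rotate k xs \<or> ys = rotate k (rev xs)}"

lemma length_cycle_trace [simp]: "length (cycle_trace c L b \<delta>) = L"
  by (simp add: cycle_trace_def)

lemma nth_cycle_trace: "r < L \<Longrightarrow> cycle_trace c L b \<delta> ! r = c (b + \<delta> * int r)"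
  by (simp add: cycle_trace_def)

lemma cycle_trace_cong:
  assumes "cycle_seq c L" "int L dvd (b - b')"
  shows "cycle_trace c L b \<delta> = cycle_trace c L b' \<delta>"
proof (rule nth_equalityI)
  fix r assume "r < length (cycle_trace c L b \<delta>)"
  moreover have "int L dvd (b + \<delta> * int r - (b' + \<delta> * int r))" using assms(2) by simp
  ultimately show "cycle_trace c L b \<delta> ! r = cycle_trace c L b' \<delta> ! r"
    using cycle_seq_eq_iff[OF assms(1)] by (simp add: nth_cycle_trace)
qed simp

lemma rotate_cycle_trace:
  assumes c: "cycle_seq c L"
  shows "rotate k (cycle_trace c L b \<delta>) = cycle_trace c L (b + \<delta> * int k) \<delta>"
proof (rule nth_equalityI)
  fix r assume "r < length (rotate k (cycle_trace c L b \<delta>))"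
  then have r: "r < L" by simp
  then have "rotate k (cycle_trace c L b \<delta>) ! r = c (b + \<delta> * int ((k + r) mod L))"
    by (simp add: nth_rotate nth_cycle_trace)
  also have "\<dots> = c (b + \<delta> * int k + \<delta> * int r)"
  proof -
    have e: "int ((k + r) mod L) = int (k + r) - int L * int ((k + r) div L)"
      by (simp add: of_nat_mod of_nat_div minus_mult_div_eq_mod[symmetric] del: of_nat_add)
    have "b + \<delta> * int ((k + r) mod L) - (b + \<delta> * int k + \<delta> * int r) = int L * (- \<delta> * int ((k + r) div L))"
      unfolding e by (simp add: algebra_simps)
    then show ?thesis using cycle_seq_eq_iff[OF c] by simp
  qed
  finally show "rotate k (cycle_trace c L b \<delta>) ! r = cycle_trace c L (b + \<delta> * int k) \<delta> ! r"
    using r by (simp add: nth_cycle_trace)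
qed simp

lemma rev_cycle_trace: "rev (cycle_trace c L b \<delta>) = cycle_trace c L (b + \<delta> * (int L - 1)) (- \<delta>)"
proof (rule nth_equalityI)
  fix r assume "r < length (rev (cycle_trace c L b \<delta>))"
  then have r: "r < L" by simp
  then have "rev (cycle_trace c L b \<delta>) ! r = c (b + \<delta> * (int L - 1 - int r))"
    by (simp add: rev_nth nth_cycle_trace of_nat_diff diff_diff_eq)
  then show "rev (cycle_trace c L b \<delta>) ! r = cycle_trace c L (b + \<delta> * (int L - 1)) (- \<delta>) ! r"
    using r by (simp add: nth_cycle_trace algebra_simps)
qed simp

lemma rotate_cycle_trace_onto:
  assumes c: "cycle_seq c L" and \<delta>: "\<delta> = 1 \<or> \<delta> = -1"
  obtains k where "rotate k (cycle_trace c L b \<delta>) = cycle_trace c L b' \<delta>"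
proof -
  have "\<exists>k. c (b + \<delta> * int k) = c b'"
  proof (cases "\<delta> = 1")
    case True
    obtain k where "k < L" "c (b + int k) = c b'" by (rule cycle_seq_reach[OF c])
    then show ?thesis using True by auto
  next
    case False
    then have "\<delta> = -1" using \<delta> by simp
    obtain k where "k < L" "c (b' + int k) = c b" by (rule cycle_seq_reach[OF c])
    then have "c (b + \<delta> * int k) = c b'"
      using \<open>\<delta> = -1\<close> cycle_seq_shift[OF c, of "b' + int k" b "- int k"] by simp
    then show ?thesis by blast
  qed
  then obtain k where "c (b + \<delta> * int k) = c b'" by blast
  then have "int L dvd (b + \<delta> * int k - b')" using cycle_seq_eq_iff[OF c] by blast
  then have "rotate k (cycle_trace c L b \<delta>) = cycle_trace c L b' \<delta>"
    using cycle_trace_cong[OF c] by (simp add: rotate_cycle_trace[OF c])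
  then show ?thesis by (rule that)
qed

lemma rot_rev_class_cycle_trace:
  assumes c: "cycle_seq c L" and \<delta>: "\<delta> = 1 \<or> \<delta> = -1"
  shows "rot_rev_class (cycle_trace c L b \<delta>) = {cycle_trace c L b' \<delta>' | b' \<delta>'. \<delta>' = 1 \<or> \<delta>' = -1}"
proof (intro equalityI subsetI)
  fix ys assume "ys \<in> rot_rev_class (cycle_trace c L b \<delta>)"
  then obtain k where "ys = rotate k (cycle_trace c L b \<delta>) \<or>
      ys = rotate k (cycle_trace c L (b + \<delta> * (int L - 1)) (- \<delta>))"
    unfolding rot_rev_class_def rev_cycle_trace by blast
  then have "ys = cycle_trace c L (b + \<delta> * int k) \<delta> \<or>
      ys = cycle_trace c L (b + \<delta> * (int L - 1) + - \<delta> * int k) (- \<delta>)"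
    by (simp only: rotate_cycle_trace[OF c])
  moreover have "- \<delta> = 1 \<or> - \<delta> = -1" using \<delta> by auto
  ultimately show "ys \<in> {cycle_trace c L b' \<delta>' | b' \<delta>'. \<delta>' = 1 \<or> \<delta>' = -1}"
    using \<delta> by blast
next
  fix ys assume "ys \<in> {cycle_trace c L b' \<delta>' | b' \<delta>'. \<delta>' = 1 \<or> \<delta>' = -1}"
  then obtain b' \<delta>' where ys: "ys = cycle_trace c L b' \<delta>'" and \<delta>': "\<delta>' = 1 \<or> \<delta>' = -1" by blast
  have onto: "\<exists>k. rotate k (cycle_trace c L b0 \<delta>') = ys" for b0
    using rotate_cycle_trace_onto[OF c \<delta>'] ys by metis
  show "ys \<in> rot_rev_class (cycle_trace c L b \<delta>)"
  proof (cases "\<delta>' = \<delta>")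
    case True
    then show ?thesis using onto[of b] unfolding rot_rev_class_def by auto
  next
    case False
    then have "\<delta>' = - \<delta>" using \<delta> \<delta>' by auto
    then show ?thesis using onto[of "b + \<delta> * (int L - 1)"]
      unfolding rot_rev_class_def rev_cycle_trace by auto
  qed
qed

lemma cycle_edge_from:
  assumes c: "cycle_seq c L" and e: "cycle_edge c (c s) y"
  shows "y = c (s + 1) \<or> y = c (s - 1)"
proof -
  obtain t where "(c s = c t \<and> y = c (t + 1)) \<or> (y = c t \<and> c s = c (t + 1))"
    using e unfolding cycle_edge_def by blast
  then show ?thesis
  proof
    assume h: "c s = c t \<and> y = c (t + 1)"
    then have "c (t + 1) = c (s + 1)" using cycle_seq_shift[OF c, of t s 1] by simp
    then show ?thesis using h by simp
  next
    assume h: "y = c t \<and> c s = c (t + 1)"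
    then have "c (t + 1 + -1) = c (s + -1)" using cycle_seq_shift[OF c, of "t + 1" s "-1"] by simp
    then show ?thesis using h by simp
  qed
qed

text \<open>A cycle all of whose steps are edges of \<open>c\<close> traverses \<open>c\<close> in one direction: it cannot
  turn back, as it does not backtrack.\<close>

lemma cycle_along_cycle_edges:
  assumes c: "cycle_seq c L" and d: "cycle_seq d m" and along: "\<forall>t. cycle_edge c (d t) (d (t + 1))"
  obtains i \<delta> where "m = L" "\<delta> = 1 \<or> \<delta> = -1" "\<forall>n::nat. d (int n) = c (i + \<delta> * int n)"
proof -
  have "d 0 \<in> range c" using cycle_edge_in_range[OF along[rule_format, of 0]] by (rule conjunct1)
  then obtain i where i: "d 0 = c i" by (auto elim!: rangeE)
  then have "d (0 + 1) = c (i + 1) \<or> d (0 + 1) = c (i - 1)"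
    using cycle_edge_from[OF c] along[rule_format, of 0] by simp
  then have "d 1 = c (i + 1) \<or> d 1 = c (i + -1)" by simp
  then obtain \<delta> where \<delta>: "\<delta> = 1 \<or> \<delta> = -1" "d 1 = c (i + \<delta>)" by blast
  have step: "d (int n) = c (i + \<delta> * int n) \<and> d (int n + 1) = c (i + \<delta> * (int n + 1))" for n
  proof (induction n)
    case 0 then show ?case using i \<delta> by simp
  next
    case (Suc n)
    have h0: "d (int n) = c (i + \<delta> * int n)" and h1: "d (int n + 1) = c (i + \<delta> * (int n + 1))"
      using Suc by simp_all
    have nbr: "d (int n + 1 + 1) = c (i + \<delta> * (int n + 1) + 1) \<or> d (int n + 1 + 1) = c (i + \<delta> * (int n + 1) - 1)"
      using cycle_edge_from[OF c] along[rule_format, of "int n + 1"] h1 by simp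
    have "d (int n + 2) \<noteq> d (int n)" by (rule cycle_seq_neighbours(2)[OF d])
    have "d (int n + 1 + 1) = c (i + \<delta> * (int n + 1 + 1))"
      using \<delta>(1)
    proof
      assume "\<delta> = 1"
      then show ?thesis using nbr \<open>d (int n + 2) \<noteq> d (int n)\<close> h0 by (auto simp: algebra_simps)
    next
      assume "\<delta> = -1"
      then show ?thesis using nbr \<open>d (int n + 2) \<noteq> d (int n)\<close> h0 by (auto simp: algebra_simps)
    qed
    then show ?case using h1 by (simp add: algebra_simps)
  qed
  have "c (i + \<delta> * int m) = c i" using step[of m] i cycle_seq_period[OF d, of 0] by simp
  then have "int L dvd \<delta> * int m" using cycle_seq_eq_iff[OF c] by simp
  then have "int L dvd int m" using \<delta>(1) by auto
  moreover have "d (int L) = d 0" using step[of L] i cycle_seq_eq_iff[OF c, of "i + \<delta> * int L" i] by simp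
  then have "int m dvd int L" using cycle_seq_eq_iff[OF d] by simp
  ultimately have mL: "m = L" by (simp add: dvd_antisym)
  have "\<forall>n::nat. d (int n) = c (i + \<delta> * int n)" using step by blast
  then show ?thesis by (rule that[OF mL \<delta>(1)])
qed

lemma cycle_list_along_cycle_edges:
  assumes c: "cycle_seq c L" and xs: "cycle_list adj xs"
    and along: "\<forall>t. cycle_edge c (cyclic_nth xs t) (cyclic_nth xs (t + 1))"
  shows "rot_rev_class xs = rot_rev_class (cycle_trace c L 0 1)"
proof -
  have d: "cycle_seq (cyclic_nth xs) (length xs)"
    using xs by (intro cycle_seq_cyclic_nth) (auto simp: cycle_list_def)
  obtain i \<delta> where L: "length xs = L" and \<delta>: "\<delta> = 1 \<or> \<delta> = -1"
    and dn: "\<forall>n::nat. cyclic_nth xs (int n) = c (i + \<delta> * int n)"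
    by (rule cycle_along_cycle_edges[OF c d along])
  have "xs = cycle_trace c L i \<delta>"
  proof (rule nth_equalityI)
    fix r assume "r < length xs"
    then show "xs ! r = cycle_trace c L i \<delta> ! r"
      using cyclic_nth_of_nat[of r xs] dn L by (simp add: nth_cycle_trace)
  qed (use L in simp)
  then show ?thesis
    using rot_rev_class_cycle_trace[OF c \<delta>] rot_rev_class_cycle_trace[OF c, of 1] by simp
qed

lemma oneway_edge_detour:
  assumes C: "C \<in> components E" and c: "cycle_seq c L" "range c \<subseteq> C"
    and ab: "a \<in> C" "b \<in> C" "(a, b) \<in> E" "(b, a) \<notin> E" "\<not> cycle_edge c a b"
  shows "\<exists>P. detour c E P"
proof -
  obtain d M where d: "cycle_seq d M" "steps_in E d" "range d \<subseteq> C"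
    "d (int M - 1) = a" "d (int M) = b"
    by (rule directed_cycle_through_oneway_edge[OF C ab(1-4)])
  show ?thesis
  proof (cases "range c \<inter> range d = {}")
    case True
    then show ?thesis by (rule disjoint_cycles_detour[OF C c d(1-3)])
  next
    case False
    then obtain q where "d q \<in> range c" by (metis disjoint_iff rangeE)
    then show ?thesis
      using cycle_meeting_cycle_detour[OF d(1,2), where q = q and p = "int M - 1"] ab(5) d(4,5) by simp
  qed
qed

lemma reversible_cycle_detour:
  assumes C: "C \<in> components E" and c: "cycle_seq c L" "range c \<subseteq> C"
    and d: "cycle_seq d M" "steps_in {(x, y). und_adj E C x y} d" "range d \<subseteq> C"
    and off: "\<not> cycle_edge c (d p) (d (p + 1))"
    and rev: "\<forall>a b. a \<in> C \<longrightarrow> b \<in> C \<longrightarrow> (a, b) \<in> E \<longrightarrow> \<not> cycle_edge c a b \<longrightarrow> (b, a) \<in> E"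
  shows "\<exists>P. detour c E P"
proof (cases "range c \<inter> range d = {}")
  case True
  have "steps_in E d" unfolding steps_in_def
  proof
    fix t
    have "d t \<notin> range c" using True rangeI[of d t] by blast
    then have "\<not> cycle_edge c (d (t + 1)) (d t)" by (meson cycle_edge_in_range)
    moreover have "und_adj E C (d t) (d (t + 1))" using d(2) unfolding steps_in_def by simp
    ultimately show "(d t, d (t + 1)) \<in> E" using rev unfolding und_adj_def by metis
  qed
  then show ?thesis using disjoint_cycles_detour[OF C c d(1) _ d(3) True] by blast
next
  case False
  then obtain q where "d q \<in> range c" by (metis disjoint_iff rangeE)
  then obtain P where "detour c {(x, y). und_adj E C x y} P"
    using cycle_meeting_cycle_detour[OF d(1,2) _ off] by blast
  then show ?thesis using undirected_detour_imp_detour[OF _ rev] by blast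
qed

text \<open>The detour is found on a cycle of the component other than \<open>c\<close>: on a directed cycle through
  a one-way edge off \<open>c\<close> if there is one, and on the second cycle itself otherwise, all of whose
  edges off \<open>c\<close> are then usable in both directions.\<close>

lemma second_cycle_detour:
  assumes C: "C \<in> components E" and c: "cycle_seq c L" "range c \<subseteq> C"
    and xs: "cycle_list (und_adj E C) xs"
    and other: "rot_rev_class xs \<noteq> rot_rev_class (cycle_trace c L 0 1)"
  shows "\<exists>P. detour c E P"
proof (cases "\<exists>a b. a \<in> C \<and> b \<in> C \<and> (a, b) \<in> E \<and> (b, a) \<notin> E \<and> \<not> cycle_edge c a b")
  case True
  then show ?thesis using oneway_edge_detour[OF C c] by blast
next
  case False
  let ?R = "{(x, y). und_adj E C x y}"
  have xs': "xs \<noteq> []" "distinct xs" "length xs \<ge> 3" using xs unfolding cycle_list_def by auto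
  have "is_walk ?R xs" "(last xs, hd xs) \<in> ?R" using xs unfolding cycle_list_def is_walk_def by auto
  then have d: "cycle_seq (cyclic_nth xs) (length xs)" "steps_in ?R (cyclic_nth xs)"
    "range (cyclic_nth xs) \<subseteq> C"
    using cycle_seq_cyclic_nth[OF xs'(2,3)] steps_in_cyclic_nth[OF _ xs'(1)]
      cyclic_nth_in_set[OF xs'(1)] cycle_list_in_component[OF xs] by blast+
  obtain p where "\<not> cycle_edge c (cyclic_nth xs p) (cyclic_nth xs (p + 1))"
    using cycle_list_along_cycle_edges[OF c(1) xs] other by blast
  moreover have "\<forall>a b. a \<in> C \<longrightarrow> b \<in> C \<longrightarrow> (a, b) \<in> E \<longrightarrow> \<not> cycle_edge c a b \<longrightarrow> (b, a) \<in> E"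
    using False by blast
  ultimately show ?thesis by (rule reversible_cycle_detour[OF C c d])
qed

lemma conv_radius_pk_two_cycles:
  fixes E :: "('n::finite \<times> 'n) set"
  assumes noloops: "\<forall>i. (i, i) \<notin> E" and wpos: "\<forall>e\<in>E. w e > 0"
    and C: "C \<in> components E" and two: "card (cycles (und_adj E C)) > 1"
  shows "conv_radius (pk E w) < ereal (1 / sigma_min E w)"
proof -
  have "finite (cycles (und_adj E C))" using two by (intro card_ge_0_finite) simp
  then have "\<not> (\<forall>K1\<in>cycles (und_adj E C). \<forall>K2\<in>cycles (und_adj E C). K1 = K2)"
    using two card_le_Suc0_iff_eq[of "cycles (und_adj E C)"] by simp
  then obtain K1 K2 where K: "K1 \<in> cycles (und_adj E C)" "K2 \<in> cycles (und_adj E C)" "K1 \<noteq> K2"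
    by blast
  then obtain xs1 where "cycle_list (und_adj E C) xs1" unfolding cycles_def by blast
  then obtain c L where c: "cycle_seq c L" "steps_in E c" "range c \<subseteq> C"
    by (rule cycle_list_imp_directed_cycle[OF C])
  obtain K where K: "K \<in> cycles (und_adj E C)" "K \<noteq> rot_rev_class (cycle_trace c L 0 1)"
    using K by metis
  then obtain xs where xs: "cycle_list (und_adj E C) xs"
    and "rot_rev_class xs \<noteq> rot_rev_class (cycle_trace c L 0 1)"
    unfolding cycles_def rot_rev_class_def by blast
  then obtain P where "detour c E P" using second_cycle_detour[OF C c(1,3)] by blast
  then obtain v X Y where "branching E v X Y" by (rule detour_imp_branching[OF noloops c(1,2)])
  then show ?thesis by (rule conv_radius_pk_lt_if_branching[OF wpos])
qed

theorem theorem5p3: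
  fixes E :: "('n::finite \<times> 'n) set" and w :: "'n \<times> 'n \<Rightarrow> real"
  assumes noloops: "\<forall>i. (i, i) \<notin> E"
    and wpos: "\<forall>e\<in>E. w e > 0"
  shows "((\<forall>C\<in>components E. is_tree (und_adj E C) C \<or> is_isolated_node (und_adj E C) C)
            \<longrightarrow> conv_radius (pk E w) = \<infinity>)
       \<and> ((\<forall>C\<in>components E. card (cycles (und_adj E C)) \<le> 1)
            \<and> (\<exists>C\<in>components E. card (cycles (und_adj E C)) = 1)
            \<longrightarrow> conv_radius (pk E w) \<le> ereal (1 / sigma_min E w))
       \<and> ((\<exists>C\<in>components E. card (cycles (und_adj E C)) > 1)
            \<longrightarrow> conv_radius (pk E w) < ereal (1 / sigma_min E w))"
proof (intro conjI impI)
  assume "\<forall>C\<in>components E. is_tree (und_adj E C) C \<or> is_isolated_node (und_adj E C) C"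
  then show "conv_radius (pk E w) = \<infinity>" by (rule conv_radius_pk_forest[OF noloops])
next
  assume "(\<forall>C\<in>components E. card (cycles (und_adj E C)) \<le> 1)
    \<and> (\<exists>C\<in>components E. card (cycles (und_adj E C)) = 1)"
  then obtain C where C: "C \<in> components E" "card (cycles (und_adj E C)) = 1" by blast
  then have "cycles (und_adj E C) \<noteq> {}" by auto
  then obtain xs where "cycle_list (und_adj E C) xs" unfolding cycles_def by blast
  then obtain c L where "cycle_seq c L" "steps_in E c"
    by (rule cycle_list_imp_directed_cycle[OF C(1)])
  then show "conv_radius (pk E w) \<le> ereal (1 / sigma_min E w)"
    by (rule conv_radius_pk_le_cycle[OF wpos])
next
  assume "\<exists>C\<in>components E. card (cycles (und_adj E C)) > 1"
  then obtain C where "C \<in> components E" "card (cycles (und_adj E C)) > 1" by blast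
  then show "conv_radius (pk E w) < ereal (1 / sigma_min E w)"
    by (rule conv_radius_pk_two_cycles[OF noloops wpos])
qed

end
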